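(* Let $(X,\Sigma,\mu)$ be a semi-finite measure space and $M:=(L^1)^*$, with $L^\infty$ regarded as a subspace of $M$ via $g\mapsto(f\mapsto\int fg\,d\mu)$. Then $\tau(L^\infty,L^1)=\tau(M,L^1)|_{L^\infty}$.
   Context: $L^\infty$, $L^1$ are the real spaces of essentially bounded, resp. integrable, functions. $\tau(L^\infty,L^1)$ is the Mackey topology of the duality $\langle L^\infty,L^1\rangle$ given by $\langle f,g\rangle=\int fg\,d\mu$ (uniform convergence on absolutely convex $\sigma(L^1,L^\infty)$-compact subsets of $L^1$), and $\tau(M,L^1)$ is the Mackey topology of the duality $\langle M,L^1\rangle$; $|_{L^\infty}$ denotes the subspace topology. *)

theory Defs
  imports "HOL-Analysis.Analysis"
begin

definition semifinite_measure :: "'a measure \<Rightarrow> bool" where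
  "semifinite_measure \<mu> \<longleftrightarrow>
     (\<forall>A\<in>sets \<mu>. emeasure \<mu> A = \<infinity> \<longrightarrow>
        (\<exists>B\<in>sets \<mu>. B \<subseteq> A \<and> 0 < emeasure \<mu> B \<and> emeasure \<mu> B < \<infinity>))"

text \<open>Real L^1 and L^infinity, represented by their (real-valued) representatives.\<close>
definition L1 :: "'a measure \<Rightarrow> ('a \<Rightarrow> real) set" where
  "L1 \<mu> = {f. integrable \<mu> f}"

definition Linf :: "'a measure \<Rightarrow> ('a \<Rightarrow> real) set" where
  "Linf \<mu> = {g. g \<in> borel_measurable \<mu> \<and> (\<exists>C. AE x in \<mu>. \<bar>g x\<bar> \<le> C)}"

definition pairing :: "'a measure \<Rightarrow> ('a \<Rightarrow> real) \<Rightarrow> ('a \<Rightarrow> real) \<Rightarrow> real" where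
  "pairing \<mu> f g = (LINT x|\<mu>. f x * g x)"

definition L1_dual :: "'a measure \<Rightarrow> (('a \<Rightarrow> real) \<Rightarrow> real) set" where
  "L1_dual \<mu> = {\<phi>.
     (\<forall>f\<in>L1 \<mu>. \<forall>h\<in>L1 \<mu>. \<forall>a b::real.
        \<phi> (\<lambda>x. a * f x + b * h x) = a * \<phi> f + b * \<phi> h) \<and>
     (\<exists>C. \<forall>f\<in>L1 \<mu>. \<bar>\<phi> f\<bar> \<le> C * (LINT x|\<mu>. \<bar>f x\<bar>))}"

definition abs_convex :: "('a \<Rightarrow> real) set \<Rightarrow> bool" where
  "abs_convex K \<longleftrightarrow>
     (\<forall>f\<in>K. \<forall>h\<in>K. \<forall>a b::real. \<bar>a\<bar> + \<bar>b\<bar> \<le> 1 \<longrightarrow> (\<lambda>x. a * f x + b * h x) \<in> K)"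

definition unif_conv_topology ::
    "'v set \<Rightarrow> 'w set set \<Rightarrow> ('w \<Rightarrow> 'v \<Rightarrow> real) \<Rightarrow> 'v topology" where
  "unif_conv_topology S \<K> p = topology (\<lambda>U. U \<subseteq> S \<and>
     (\<forall>x\<in>U. \<exists>F \<epsilon>. finite F \<and> F \<subseteq> \<K> \<and> \<epsilon> > 0 \<and>
        {y\<in>S. \<forall>K\<in>F. \<forall>w\<in>K. \<bar>p w y - p w x\<bar> \<le> \<epsilon>} \<subseteq> U))"

definition weak_topology :: "'w set \<Rightarrow> 'v set \<Rightarrow> ('w \<Rightarrow> 'v \<Rightarrow> real) \<Rightarrow> 'w topology" where
  "weak_topology W V p = unif_conv_topology W {{v} | v. v \<in> V} (\<lambda>v w. p w v)"

definition mackey_topology ::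
    "'v set \<Rightarrow> ('a \<Rightarrow> real) set \<Rightarrow> (('a \<Rightarrow> real) \<Rightarrow> 'v \<Rightarrow> real) \<Rightarrow> 'v topology" where
  "mackey_topology V W p = unif_conv_topology V
     {K. K \<subseteq> W \<and> abs_convex K \<and> compactin (weak_topology W V p) K} p"

end

theory Submission
  imports Defs
begin

text \<open>Both Mackey topologies are topologies of uniform convergence on absolutely convex sets,
  compact for \<open>\<sigma>(L\<^sup>1, L\<^sup>\<infinity>)\<close> and for \<open>\<sigma>(L\<^sup>1, M)\<close> respectively, and the pullback of
  the second one to \<open>L\<^sup>\<infinity>\<close> is again of this form.  So it suffices that both weak topologies have
  the same compact sets.  As \<open>L\<^sup>\<infinity> \<subseteq> M\<close>, \<open>\<sigma>(L\<^sup>1, M)\<close>-compact sets are \<open>\<sigma>(L\<^sup>1, L\<^sup>\<infinity>)\<close>-compact.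
  Conversely, a gliding hump argument shows that a \<open>\<sigma>(L\<^sup>1, L\<^sup>\<infinity>)\<close>-compact set \<open>K\<close> is uniformly
  concentrated on a set \<open>E\<close> of finite measure, and on \<open>E\<close> every \<open>\<phi> \<in> M\<close> is given by an
  \<open>L\<^sup>\<infinity>\<close>-function (Radon-Nikodym).  Hence every \<open>\<phi> \<in> M\<close> is a uniform limit on \<open>K\<close> of elements
  of \<open>L\<^sup>\<infinity>\<close>, and the two weak topologies agree on \<open>K\<close>.\<close>

section \<open>Topologies of uniform convergence and weak topologies\<close>

definition unif_conv_nbhd :: "'v set \<Rightarrow> ('w \<Rightarrow> 'v \<Rightarrow> real) \<Rightarrow> 'w set set \<Rightarrow> 'v \<Rightarrow> real \<Rightarrow> 'v set" where
  "unif_conv_nbhd S p F x e = {y\<in>S. \<forall>K\<in>F. \<forall>w\<in>K. \<bar>p w y - p w x\<bar> \<le> e}"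

lemma unif_conv_nbhd_trans:
  "y \<in> unif_conv_nbhd S p F z a \<Longrightarrow> z \<in> unif_conv_nbhd S p F x b \<Longrightarrow> y \<in> unif_conv_nbhd S p F x (a + b)"
  unfolding unif_conv_nbhd_def by (force intro: order_trans[OF abs_triangle_ineq4[of _ "p _ z"]])

lemma istopology_unif_conv:
  "istopology (\<lambda>U. U \<subseteq> S \<and>
     (\<forall>x\<in>U. \<exists>F e. finite F \<and> F \<subseteq> \<K> \<and> e > 0 \<and> unif_conv_nbhd S p F x e \<subseteq> U))"
  unfolding istopology_def
proof (rule conjI; intro allI impI)
  fix U V
  assume U: "U \<subseteq> S \<and> (\<forall>x\<in>U. \<exists>F e. finite F \<and> F \<subseteq> \<K> \<and> e > 0 \<and> unif_conv_nbhd S p F x e \<subseteq> U)"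
    and V: "V \<subseteq> S \<and> (\<forall>x\<in>V. \<exists>F e. finite F \<and> F \<subseteq> \<K> \<and> e > 0 \<and> unif_conv_nbhd S p F x e \<subseteq> V)"
  have "\<exists>F e. finite F \<and> F \<subseteq> \<K> \<and> e > 0 \<and> unif_conv_nbhd S p F x e \<subseteq> U \<inter> V" if "x \<in> U \<inter> V" for x
  proof -
    obtain F1 e1 where 1: "finite F1" "F1 \<subseteq> \<K>" "e1 > 0" "unif_conv_nbhd S p F1 x e1 \<subseteq> U"
      using U \<open>x \<in> U \<inter> V\<close> by blast
    obtain F2 e2 where 2: "finite F2" "F2 \<subseteq> \<K>" "e2 > 0" "unif_conv_nbhd S p F2 x e2 \<subseteq> V"
      using V \<open>x \<in> U \<inter> V\<close> by blast
    have "unif_conv_nbhd S p (F1 \<union> F2) x (min e1 e2) \<subseteq> unif_conv_nbhd S p F1 x e1 \<inter> unif_conv_nbhd S p F2 x e2"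
      unfolding unif_conv_nbhd_def by auto
    then show ?thesis
      using 1 2 by (intro exI[of _ "F1 \<union> F2"] exI[of _ "min e1 e2"]) auto
  qed
  then show "U \<inter> V \<subseteq> S \<and> (\<forall>x\<in>U \<inter> V. \<exists>F e. finite F \<and> F \<subseteq> \<K> \<and> e > 0 \<and> unif_conv_nbhd S p F x e \<subseteq> U \<inter> V)"
    using U by blast
next
  fix \<U> :: "'a set set"
  assume "\<forall>U\<in>\<U>. U \<subseteq> S \<and> (\<forall>x\<in>U. \<exists>F e. finite F \<and> F \<subseteq> \<K> \<and> e > 0 \<and> unif_conv_nbhd S p F x e \<subseteq> U)"
  then show "\<Union>\<U> \<subseteq> S \<and> (\<forall>x\<in>\<Union>\<U>. \<exists>F e. finite F \<and> F \<subseteq> \<K> \<and> e > 0 \<and> unif_conv_nbhd S p F x e \<subseteq> \<Union>\<U>)"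
    by (meson Sup_upper Union_least UnionE subset_trans)
qed

lemma openin_unif_conv_topology:
  "openin (unif_conv_topology S \<K> p) U \<longleftrightarrow> U \<subseteq> S \<and>
     (\<forall>x\<in>U. \<exists>F e. finite F \<and> F \<subseteq> \<K> \<and> e > 0 \<and> unif_conv_nbhd S p F x e \<subseteq> U)"
  unfolding unif_conv_topology_def
  by (simp only: topology_inverse'[OF istopology_unif_conv[unfolded unif_conv_nbhd_def]] unif_conv_nbhd_def)

lemma openin_unif_conv_topologyE:
  assumes "openin (unif_conv_topology S \<K> p) U" "x \<in> U"
  obtains F e where "finite F" "F \<subseteq> \<K>" "e > 0" "unif_conv_nbhd S p F x e \<subseteq> U"
  using assms unfolding openin_unif_conv_topology by blast

lemma topspace_unif_conv_topology [simp]: "topspace (unif_conv_topology S \<K> p) = S"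
proof (rule antisym)
  show "topspace (unif_conv_topology S \<K> p) \<subseteq> S"
    using openin_topspace[of "unif_conv_topology S \<K> p"] unfolding openin_unif_conv_topology by blast
  have "openin (unif_conv_topology S \<K> p) S"
    unfolding openin_unif_conv_topology unif_conv_nbhd_def
    by (intro conjI ballI exI[of _ "{}"] exI[of _ "1::real"]) auto
  then show "S \<subseteq> topspace (unif_conv_topology S \<K> p)"
    by (rule openin_subset)
qed

text \<open>A uniform neighbourhood need not be open, but the union of the strictly smaller ones is.\<close>
lemma openin_unif_conv_topology_inner_nbhd:
  assumes "finite F" "F \<subseteq> \<K>"
  shows "openin (unif_conv_topology S \<K> p) {y. \<exists>d>0. y \<in> unif_conv_nbhd S p F x (e - d)}"
  unfolding openin_unif_conv_topology
proof (intro conjI ballI)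
  show "{y. \<exists>d>0. y \<in> unif_conv_nbhd S p F x (e - d)} \<subseteq> S"
    unfolding unif_conv_nbhd_def by blast
  fix y assume "y \<in> {y. \<exists>d>0. y \<in> unif_conv_nbhd S p F x (e - d)}"
  then obtain d where "d > 0" and y: "y \<in> unif_conv_nbhd S p F x (e - d)" by blast
  have "unif_conv_nbhd S p F y (d/2) \<subseteq> {y. \<exists>d>0. y \<in> unif_conv_nbhd S p F x (e - d)}"
  proof
    fix z assume "z \<in> unif_conv_nbhd S p F y (d/2)"
    from unif_conv_nbhd_trans[OF this y] have "z \<in> unif_conv_nbhd S p F x (e - d/2)" by simp
    then show "z \<in> {y. \<exists>d>0. y \<in> unif_conv_nbhd S p F x (e - d)}"
      using \<open>d > 0\<close> by (intro CollectI exI[of _ "d/2"]) simp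
  qed
  then show "\<exists>F' e'. finite F' \<and> F' \<subseteq> \<K> \<and> e' > 0 \<and>
      unif_conv_nbhd S p F' y e' \<subseteq> {y. \<exists>d>0. y \<in> unif_conv_nbhd S p F x (e - d)}"
    using assms \<open>d > 0\<close> by (intro exI[of _ F] exI[of _ "d/2"]) simp
qed

lemma preimage_unif_conv_nbhd:
  assumes "x \<in> S" and maps: "\<And>x. x \<in> S \<Longrightarrow> \<iota> x \<in> T"
    and pairing: "\<And>w x. x \<in> S \<Longrightarrow> q w (\<iota> x) = p w x"
  shows "\<iota> -` unif_conv_nbhd T q F (\<iota> x) e \<inter> S = unif_conv_nbhd S p F x e"
  using assms unfolding unif_conv_nbhd_def by auto

lemma openin_unif_conv_topology_preimage:
  assumes maps: "\<And>x. x \<in> S \<Longrightarrow> \<iota> x \<in> T"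
    and pairing: "\<And>w x. x \<in> S \<Longrightarrow> q w (\<iota> x) = p w x"
    and U: "openin (unif_conv_topology S \<K> p) U"
  shows "\<exists>U'. openin (unif_conv_topology T \<K> q) U' \<and> U = \<iota> -` U' \<inter> S"
proof -
  have US: "U \<subseteq> S" using U by (simp add: openin_unif_conv_topology)
  have "\<forall>x\<in>U. \<exists>F e. finite F \<and> F \<subseteq> \<K> \<and> e > 0 \<and> unif_conv_nbhd S p F x e \<subseteq> U"
    using U by (simp add: openin_unif_conv_topology)
  then obtain F e where Fe: "\<And>x. x \<in> U \<Longrightarrow>
      finite (F x) \<and> F x \<subseteq> \<K> \<and> e x > 0 \<and> unif_conv_nbhd S p (F x) x (e x) \<subseteq> U"
    by metis
  define N where "N x = {z. \<exists>d>0. z \<in> unif_conv_nbhd T q (F x) (\<iota> x) (e x - d)}" for x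
  have "openin (unif_conv_topology T \<K> q) (N x)" if "x \<in> U" for x
    unfolding N_def using Fe[OF that] by (intro openin_unif_conv_topology_inner_nbhd) auto
  then have "openin (unif_conv_topology T \<K> q) (\<Union>x\<in>U. N x)" by blast
  moreover have "U = \<iota> -` (\<Union>x\<in>U. N x) \<inter> S"
  proof (intro equalityI subsetI)
    fix x assume "x \<in> U"
    then have "x \<in> S" using US by blast
    have "\<iota> x \<in> N x"
      using maps[OF \<open>x \<in> S\<close>] Fe[OF \<open>x \<in> U\<close>] unfolding N_def unif_conv_nbhd_def
      by (intro CollectI exI[of _ "e x / 2"]) auto
    then show "x \<in> \<iota> -` (\<Union>x\<in>U. N x) \<inter> S" using \<open>x \<in> U\<close> \<open>x \<in> S\<close> by blast
  next
    fix y assume "y \<in> \<iota> -` (\<Union>x\<in>U. N x) \<inter> S"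
    then obtain x d where x: "x \<in> U" "y \<in> S" "d > 0" "\<iota> y \<in> unif_conv_nbhd T q (F x) (\<iota> x) (e x - d)"
      unfolding N_def by blast
    then have "y \<in> unif_conv_nbhd S p (F x) x (e x - d)"
      using preimage_unif_conv_nbhd[where \<iota> = \<iota> and q = q and p = p, OF _ maps pairing] US x by blast
    then have "y \<in> unif_conv_nbhd S p (F x) x (e x)"
      using \<open>d > 0\<close> unfolding unif_conv_nbhd_def by fastforce
    then show "y \<in> U" using Fe[OF \<open>x \<in> U\<close>] by blast
  qed
  ultimately show ?thesis by blast
qed

lemma pullback_unif_conv_topology:
  assumes maps: "\<And>x. x \<in> S \<Longrightarrow> \<iota> x \<in> T"
    and pairing: "\<And>w x. x \<in> S \<Longrightarrow> q w (\<iota> x) = p w x"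
  shows "pullback_topology S \<iota> (unif_conv_topology T \<K> q) = unif_conv_topology S \<K> p"
proof (subst topology_eq, intro allI iffI)
  fix U assume "openin (pullback_topology S \<iota> (unif_conv_topology T \<K> q)) U"
  then obtain U' where U': "openin (unif_conv_topology T \<K> q) U'" and U: "U = \<iota> -` U' \<inter> S"
    by (auto simp: openin_pullback_topology)
  have "\<exists>F e. finite F \<and> F \<subseteq> \<K> \<and> e > 0 \<and> unif_conv_nbhd S p F x e \<subseteq> U" if "x \<in> U" for x
  proof -
    have "x \<in> S" "\<iota> x \<in> U'" using that U by auto
    obtain F e where "finite F" "F \<subseteq> \<K>" "e > 0" "unif_conv_nbhd T q F (\<iota> x) e \<subseteq> U'"
      using U' \<open>\<iota> x \<in> U'\<close> by (rule openin_unif_conv_topologyE)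
    moreover have "unif_conv_nbhd S p F x e \<subseteq> U"
      using preimage_unif_conv_nbhd[where \<iota> = \<iota> and q = q and p = p, OF \<open>x \<in> S\<close> maps pairing]
        calculation(4) U by blast
    ultimately show ?thesis by blast
  qed
  moreover have "U \<subseteq> S" using U by blast
  ultimately show "openin (unif_conv_topology S \<K> p) U"
    unfolding openin_unif_conv_topology by blast
next
  fix U assume "openin (unif_conv_topology S \<K> p) U"
  from openin_unif_conv_topology_preimage[OF maps pairing this]
  show "openin (pullback_topology S \<iota> (unif_conv_topology T \<K> q)) U"
    by (simp add: openin_pullback_topology)
qed

lemma topspace_weak_topology [simp]: "topspace (weak_topology W V p) = W"
  by (simp add: weak_topology_def)

lemma openin_weak_topology_slab:
  assumes "v \<in> V"
  shows "openin (weak_topology W V p) {y\<in>W. \<bar>p y v - p x v\<bar> < \<delta>}"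
  unfolding weak_topology_def openin_unif_conv_topology
proof (intro conjI ballI)
  fix y assume y: "y \<in> {y\<in>W. \<bar>p y v - p x v\<bar> < \<delta>}"
  define r where "r = \<delta> - \<bar>p y v - p x v\<bar>"
  have "unif_conv_nbhd W (\<lambda>v w. p w v) {{v}} y (r/2) \<subseteq> {y\<in>W. \<bar>p y v - p x v\<bar> < \<delta>}"
    using y unfolding unif_conv_nbhd_def r_def by (auto simp: abs_if split: if_splits)
  then show "\<exists>F e. finite F \<and> F \<subseteq> {{v} |v. v \<in> V} \<and> e > 0 \<and>
      unif_conv_nbhd W (\<lambda>v w. p w v) F y e \<subseteq> {y\<in>W. \<bar>p y v - p x v\<bar> < \<delta>}"
    using assms y by (intro exI[of _ "{{v}}"] exI[of _ "r/2"]) (auto simp: r_def)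
qed auto

lemma openin_weak_topology_ball:
  assumes "finite G" "G \<subseteq> V"
  shows "openin (weak_topology W V p) {y\<in>W. \<forall>v\<in>G. \<bar>p y v - p x v\<bar> < \<delta>}"
proof -
  have "openin (weak_topology W V p) ((\<Inter>v\<in>G. {y\<in>W. \<bar>p y v - p x v\<bar> < \<delta>}) \<inter> topspace (weak_topology W V p))"
    using assms by (intro openin_INT openin_weak_topology_slab) auto
  moreover have "(\<Inter>v\<in>G. {y\<in>W. \<bar>p y v - p x v\<bar> < \<delta>}) \<inter> topspace (weak_topology W V p) =
      {y\<in>W. \<forall>v\<in>G. \<bar>p y v - p x v\<bar> < \<delta>}"
    by auto
  ultimately show ?thesis by simp
qed

lemma openin_weak_topologyE:
  assumes "openin (weak_topology W V p) U" "x \<in> U"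
  obtains G e where "finite G" "G \<subseteq> V" "e > 0" "{y\<in>W. \<forall>v\<in>G. \<bar>p y v - p x v\<bar> \<le> e} \<subseteq> U"
proof -
  obtain F e where F: "finite F" "F \<subseteq> {{v} |v. v \<in> V}" "e > 0"
      "unif_conv_nbhd W (\<lambda>v w. p w v) F x e \<subseteq> U"
    using assms unfolding weak_topology_def by (rule openin_unif_conv_topologyE)
  have "finite (\<Union>F)" using F(1,2) by (intro finite_Union) auto
  moreover have "\<Union>F \<subseteq> V" using F(2) by auto
  moreover have "unif_conv_nbhd W (\<lambda>v w. p w v) F x e = {y\<in>W. \<forall>v\<in>\<Union>F. \<bar>p y v - p x v\<bar> \<le> e}"
    unfolding unif_conv_nbhd_def by auto
  ultimately show ?thesis using that F(3,4) by simp
qed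

lemma compactin_weak_topology_cluster_point:
  assumes K: "compactin (weak_topology W V p) K"
    and A: "\<And>i. i \<in> I \<Longrightarrow> A i \<subseteq> K"
    and fip: "\<And>J. finite J \<Longrightarrow> J \<subseteq> I \<Longrightarrow> \<exists>f\<in>K. \<forall>j\<in>J. f \<in> A j"
  obtains c where "c \<in> K"
    "\<And>i G \<delta>. i \<in> I \<Longrightarrow> finite G \<Longrightarrow> G \<subseteq> V \<Longrightarrow> \<delta> > 0 \<Longrightarrow> \<exists>f\<in>A i. \<forall>v\<in>G. \<bar>p f v - p c v\<bar> < \<delta>"
proof -
  let ?X = "weak_topology W V p"
  let ?C = "\<lambda>i. ?X closure_of A i"
  have KW: "K \<subseteq> W" using compactin_subset_topspace[OF K] by simp
  have cpt: "\<And>\<U>. (\<forall>C\<in>\<U>. closedin ?X C) \<Longrightarrow> (\<forall>\<F>. finite \<F> \<and> \<F> \<subseteq> \<U> \<longrightarrow> K \<inter> \<Inter>\<F> \<noteq> {})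
      \<Longrightarrow> K \<inter> \<Inter>\<U> \<noteq> {}"
    using K[unfolded compactin_fip] by blast
  have "K \<inter> \<Inter>\<F> \<noteq> {}" if F: "finite \<F>" "\<F> \<subseteq> ?C ` I" for \<F>
  proof -
    obtain J where J: "finite J" "J \<subseteq> I" "\<F> = ?C ` J"
      using F by (meson finite_subset_image)
    obtain f where f: "f \<in> K" "\<forall>j\<in>J. f \<in> A j" using fip[OF J(1,2)] by blast
    have "A j \<subseteq> ?C j" if "j \<in> J" for j
      using A[of j] J(2) KW that by (intro closure_of_subset) auto
    then show ?thesis using f J(3) by blast
  qed
  then have "K \<inter> \<Inter>(?C ` I) \<noteq> {}" by (intro cpt) auto
  then obtain c where c: "c \<in> K" "\<And>i. i \<in> I \<Longrightarrow> c \<in> ?C i" by auto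
  have "\<exists>f\<in>A i. \<forall>v\<in>G. \<bar>p f v - p c v\<bar> < \<delta>"
    if i: "i \<in> I" and G: "finite G" "G \<subseteq> V" and "\<delta> > 0" for i G \<delta>
  proof -
    have "openin ?X {y\<in>W. \<forall>v\<in>G. \<bar>p y v - p c v\<bar> < \<delta>}"
      using G by (rule openin_weak_topology_ball)
    moreover have "c \<in> {y\<in>W. \<forall>v\<in>G. \<bar>p y v - p c v\<bar> < \<delta>}" using c(1) KW \<open>\<delta> > 0\<close> by auto
    ultimately obtain f where "f \<in> A i" "f \<in> {y\<in>W. \<forall>v\<in>G. \<bar>p y v - p c v\<bar> < \<delta>}"
      using c(2)[OF i] unfolding in_closure_of by meson
    then show ?thesis by blast
  qed
  with c(1) show ?thesis by (rule that)
qed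

lemma compactin_weak_topology_sequence_cluster_point:
  fixes f :: "nat \<Rightarrow> 'w"
  assumes K: "compactin (weak_topology W V p) K" and f: "\<And>n. f n \<in> K"
  obtains c where "c \<in> K"
    "\<And>i G \<delta>. finite G \<Longrightarrow> G \<subseteq> V \<Longrightarrow> \<delta> > 0 \<Longrightarrow> \<exists>j\<ge>i. \<forall>v\<in>G. \<bar>p (f j) v - p c v\<bar> < \<delta>"
proof -
  have sub: "f ` {i..} \<subseteq> K" if "i \<in> UNIV" for i using f by blast
  have fip: "\<exists>g\<in>K. \<forall>j\<in>J. g \<in> f ` {j..}" if "finite J" "J \<subseteq> UNIV" for J
    using f that(1) by (intro bexI[of _ "f (Max (insert 0 J))"]) auto
  obtain c where "c \<in> K" and c: "\<And>i G \<delta>. i \<in> UNIV \<Longrightarrow> finite G \<Longrightarrow> G \<subseteq> V \<Longrightarrow> \<delta> > 0 \<Longrightarrow>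
      \<exists>g\<in>f ` {i..}. \<forall>v\<in>G. \<bar>p g v - p c v\<bar> < \<delta>"
    using compactin_weak_topology_cluster_point[where A = "\<lambda>i. f ` {i..}" and I = UNIV, OF K sub fip]
    by blast
  have "\<exists>j\<ge>i. \<forall>v\<in>G. \<bar>p (f j) v - p c v\<bar> < \<delta>" if "finite G" "G \<subseteq> V" "\<delta> > 0" for i G \<delta>
    using c[OF UNIV_I that] by auto
  with \<open>c \<in> K\<close> show ?thesis by (rule that)
qed

lemma openin_weak_topology_uniform_approx:
  assumes approx: "\<And>v' e. v' \<in> V' \<Longrightarrow> e > 0 \<Longrightarrow> \<exists>v\<in>V. \<forall>w\<in>K. \<bar>q w v' - p w v\<bar> \<le> e"
    and "K \<subseteq> W" and U: "openin (weak_topology W V' q) U" and x: "x \<in> K" "x \<in> U"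
  obtains B where "openin (weak_topology W V p) B" "x \<in> B" "B \<inter> K \<subseteq> U"
proof -
  obtain G e where G: "finite G" "G \<subseteq> V'" "e > 0"
      and GU: "{y\<in>W. \<forall>v'\<in>G. \<bar>q y v' - q x v'\<bar> \<le> e} \<subseteq> U"
    using U x(2) by (rule openin_weak_topologyE)
  have "\<forall>v'\<in>G. \<exists>v\<in>V. \<forall>w\<in>K. \<bar>q w v' - p w v\<bar> \<le> e/3"
    using G by (intro ballI approx) auto
  then obtain a where a: "\<And>v'. v' \<in> G \<Longrightarrow> a v' \<in> V \<and> (\<forall>w\<in>K. \<bar>q w v' - p w (a v')\<bar> \<le> e/3)"
    by metis
  define B where "B = {y\<in>W. \<forall>v\<in>a ` G. \<bar>p y v - p x v\<bar> < e/3}"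
  have "openin (weak_topology W V p) B"
    unfolding B_def using G(1) a by (intro openin_weak_topology_ball) auto
  moreover have "x \<in> B" using x \<open>K \<subseteq> W\<close> G(3) unfolding B_def by auto
  moreover have "B \<inter> K \<subseteq> U"
  proof
    fix y assume y: "y \<in> B \<inter> K"
    have "\<bar>q y v' - q x v'\<bar> \<le> e" if "v' \<in> G" for v'
    proof -
      have "\<bar>q y v' - p y (a v')\<bar> \<le> e/3" "\<bar>q x v' - p x (a v')\<bar> \<le> e/3"
        using a[OF that] y x(1) by auto
      moreover have "\<bar>p y (a v') - p x (a v')\<bar> < e/3" using y that unfolding B_def by auto
      ultimately show ?thesis unfolding abs_le_iff abs_less_iff by linarith
    qed
    then show "y \<in> U" using y GU unfolding B_def by auto
  qed
  ultimately show ?thesis by (rule that)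
qed

text \<open>Uniform approximability on \<open>K\<close> makes \<open>\<sigma>(W, V')\<close> coarser than \<open>\<sigma>(W, V)\<close> on \<open>K\<close>.\<close>
lemma compactin_weak_topology_uniform_approx:
  assumes K: "compactin (weak_topology W V p) K"
    and approx: "\<And>v' e. v' \<in> V' \<Longrightarrow> e > 0 \<Longrightarrow> \<exists>v\<in>V. \<forall>w\<in>K. \<bar>q w v' - p w v\<bar> \<le> e"
  shows "compactin (weak_topology W V' q) K"
proof -
  let ?X = "subtopology (weak_topology W V p) K"
  have KW: "K \<subseteq> W" using compactin_subset_topspace[OF K] by simp
  have "openin ?X {x \<in> topspace ?X. x \<in> U}" if U: "openin (weak_topology W V' q) U" for U
  proof (subst openin_subopen, intro ballI)
    fix x assume "x \<in> {x \<in> topspace ?X. x \<in> U}"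
    then have x: "x \<in> K" "x \<in> U" by auto
    obtain B where "openin (weak_topology W V p) B" "x \<in> B" "B \<inter> K \<subseteq> U"
      using openin_weak_topology_uniform_approx[OF approx KW U x] by blast
    then show "\<exists>T. openin ?X T \<and> x \<in> T \<and> T \<subseteq> {x \<in> topspace ?X. x \<in> U}"
      using x KW by (intro exI[of _ "B \<inter> K"]) (auto simp: openin_subtopology)
  qed
  then have "continuous_map ?X (weak_topology W V' q) id"
    unfolding continuous_map by auto
  moreover have "compactin ?X K" using K by (simp add: compactin_subtopology)
  ultimately show ?thesis using image_compactin[of ?X K _ id] by simp
qed


section \<open>The pairings of \<open>L\<^sup>1\<close> with \<open>L\<^sup>\<infinity>\<close> and with \<open>(L\<^sup>1)\<^sup>*\<close>\<close>

lemma LinfE: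
  assumes "g \<in> Linf \<mu>"
  obtains C where "g \<in> borel_measurable \<mu>" "C \<ge> 0" "AE x in \<mu>. \<bar>g x\<bar> \<le> C"
proof -
  obtain C where "g \<in> borel_measurable \<mu>" and C: "AE x in \<mu>. \<bar>g x\<bar> \<le> C"
    using assms unfolding Linf_def by blast
  moreover from C have "AE x in \<mu>. \<bar>g x\<bar> \<le> max C 0" by eventually_elim simp
  ultimately show ?thesis using that[of "max C 0"] by simp
qed

lemma bounded_measurable_in_Linf:
  "g \<in> borel_measurable \<mu> \<Longrightarrow> (\<And>x. \<bar>g x\<bar> \<le> C) \<Longrightarrow> g \<in> Linf \<mu>"
  unfolding Linf_def by auto

lemma Linf_add: "u \<in> Linf \<mu> \<Longrightarrow> v \<in> Linf \<mu> \<Longrightarrow> (\<lambda>x. u x + v x) \<in> Linf \<mu>"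
proof -
  assume "u \<in> Linf \<mu>" "v \<in> Linf \<mu>"
  then obtain Cu Cv where "u \<in> borel_measurable \<mu>" "AE x in \<mu>. \<bar>u x\<bar> \<le> Cu"
      "v \<in> borel_measurable \<mu>" "AE x in \<mu>. \<bar>v x\<bar> \<le> Cv"
    unfolding Linf_def by blast
  moreover from this(2,4) have "AE x in \<mu>. \<bar>u x + v x\<bar> \<le> Cu + Cv"
    by eventually_elim (rule order_trans[OF abs_triangle_ineq add_mono])
  ultimately show ?thesis unfolding Linf_def by auto
qed

lemma AE_abs_mult_le:
  fixes f g :: "'a \<Rightarrow> real"
  assumes "AE x in \<mu>. \<bar>g x\<bar> \<le> C"
  shows "AE x in \<mu>. \<bar>f x * g x\<bar> \<le> C * \<bar>f x\<bar>"
  using assms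
proof eventually_elim
  fix x assume "\<bar>g x\<bar> \<le> C"
  then have "\<bar>f x\<bar> * \<bar>g x\<bar> \<le> \<bar>f x\<bar> * C" by (simp add: mult_left_mono)
  then show "\<bar>f x * g x\<bar> \<le> C * \<bar>f x\<bar>" by (simp add: abs_mult mult.commute)
qed

lemma integrable_mult_Linf:
  assumes f: "integrable \<mu> f" and g: "g \<in> Linf \<mu>"
  shows "integrable \<mu> (\<lambda>x. f x * g x)"
proof -
  obtain C where "g \<in> borel_measurable \<mu>" "C \<ge> 0" and C: "AE x in \<mu>. \<bar>g x\<bar> \<le> C"
    using g by (rule LinfE)
  show ?thesis
  proof (rule Bochner_Integration.integrable_bound[of _ "\<lambda>x. C * f x"])
    show "integrable \<mu> (\<lambda>x. C * f x)" using f by simp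
    show "(\<lambda>x. f x * g x) \<in> borel_measurable \<mu>"
      using borel_measurable_integrable[OF f] \<open>g \<in> borel_measurable \<mu>\<close> by measurable
    show "AE x in \<mu>. norm (f x * g x) \<le> norm (C * f x)"
      using AE_abs_mult_le[OF C] by eventually_elim (simp add: abs_mult \<open>C \<ge> 0\<close>)
  qed
qed

lemma pairing_add_right:
  assumes "f \<in> L1 \<mu>" "u \<in> Linf \<mu>" "v \<in> Linf \<mu>" "\<And>x. w x = u x + v x"
  shows "pairing \<mu> f w = pairing \<mu> f u + pairing \<mu> f v"
proof -
  have "integrable \<mu> (\<lambda>x. f x * u x)" "integrable \<mu> (\<lambda>x. f x * v x)"
    using assms(1-3) by (auto simp: L1_def intro: integrable_mult_Linf)
  then show ?thesis unfolding pairing_def assms(4) by (simp add: distrib_left)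
qed

lemma pairing_in_L1_dual:
  assumes g: "g \<in> Linf \<mu>"
  shows "(\<lambda>f. pairing \<mu> f g) \<in> L1_dual \<mu>"
proof -
  obtain C where "g \<in> borel_measurable \<mu>" "C \<ge> 0" and C: "AE x in \<mu>. \<bar>g x\<bar> \<le> C"
    using g by (rule LinfE)
  have "pairing \<mu> (\<lambda>x. a * f x + b * h x) g = a * pairing \<mu> f g + b * pairing \<mu> h g"
    if "f \<in> L1 \<mu>" "h \<in> L1 \<mu>" for f h and a b :: real
  proof -
    have "integrable \<mu> (\<lambda>x. f x * g x)" "integrable \<mu> (\<lambda>x. h x * g x)"
      using that g by (auto simp: L1_def intro: integrable_mult_Linf)
    then show ?thesis unfolding pairing_def by (simp add: algebra_simps)
  qed
  moreover have "\<bar>pairing \<mu> f g\<bar> \<le> C * (LINT x|\<mu>. \<bar>f x\<bar>)" if "f \<in> L1 \<mu>" for f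
  proof -
    have f: "integrable \<mu> f" using that by (simp add: L1_def)
    have "\<bar>LINT x|\<mu>. f x * g x\<bar> \<le> (LINT x|\<mu>. \<bar>f x * g x\<bar>)" by (rule integral_abs_bound)
    also have "\<dots> \<le> (LINT x|\<mu>. C * \<bar>f x\<bar>)"
      using integrable_mult_Linf[OF f g] f AE_abs_mult_le[OF C] by (intro integral_mono_AE) auto
    finally show ?thesis unfolding pairing_def by simp
  qed
  ultimately show ?thesis unfolding L1_dual_def by blast
qed

lemma L1_dual_linear:
  assumes "\<phi> \<in> L1_dual \<mu>" "f \<in> L1 \<mu>" "h \<in> L1 \<mu>"
  shows "\<phi> (\<lambda>x. a * f x + b * h x) = a * \<phi> f + b * \<phi> h"
  using assms unfolding L1_dual_def by blast

lemma L1_dual_add: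
  assumes "\<phi> \<in> L1_dual \<mu>" "f \<in> L1 \<mu>" "h \<in> L1 \<mu>"
  shows "\<phi> (\<lambda>x. f x + h x) = \<phi> f + \<phi> h"
  using L1_dual_linear[OF assms, of 1 1] by simp

lemma L1_dual_diff:
  assumes "\<phi> \<in> L1_dual \<mu>" "f \<in> L1 \<mu>" "h \<in> L1 \<mu>"
  shows "\<phi> (\<lambda>x. f x - h x) = \<phi> f - \<phi> h"
  using L1_dual_linear[OF assms, of 1 "-1"] by simp

lemma L1_dual_bound:
  assumes "\<phi> \<in> L1_dual \<mu>"
  obtains C where "C \<ge> 0" "\<And>f. f \<in> L1 \<mu> \<Longrightarrow> \<bar>\<phi> f\<bar> \<le> C * (LINT x|\<mu>. \<bar>f x\<bar>)"
proof -
  obtain C where C: "\<And>f. f \<in> L1 \<mu> \<Longrightarrow> \<bar>\<phi> f\<bar> \<le> C * (LINT x|\<mu>. \<bar>f x\<bar>)"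
    using assms unfolding L1_dual_def by blast
  show ?thesis
  proof (rule that[of "max C 0"])
    fix f assume "f \<in> L1 \<mu>"
    have "C * (LINT x|\<mu>. \<bar>f x\<bar>) \<le> max C 0 * (LINT x|\<mu>. \<bar>f x\<bar>)"
      by (intro mult_right_mono) auto
    then show "\<bar>\<phi> f\<bar> \<le> max C 0 * (LINT x|\<mu>. \<bar>f x\<bar>)" using C[OF \<open>f \<in> L1 \<mu>\<close>] by linarith
  qed simp
qed

lemma L1_dual_tendsto:
  assumes \<phi>: "\<phi> \<in> L1_dual \<mu>"
    and s: "\<And>i. s i \<in> L1 \<mu>" and f: "f \<in> L1 \<mu>"
    and lim: "\<And>x. x \<in> space \<mu> \<Longrightarrow> (\<lambda>i. s i x) \<longlonglongrightarrow> f x"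
    and w: "integrable \<mu> w" and dominated: "\<And>i x. x \<in> space \<mu> \<Longrightarrow> \<bar>s i x\<bar> \<le> w x"
  shows "(\<lambda>i. \<phi> (s i)) \<longlonglongrightarrow> \<phi> f"
proof -
  obtain C where C: "\<And>f. f \<in> L1 \<mu> \<Longrightarrow> \<bar>\<phi> f\<bar> \<le> C * (LINT x|\<mu>. \<bar>f x\<bar>)"
    using L1_dual_bound[OF \<phi>] by blast
  have si: "integrable \<mu> (s i)" for i using s by (simp add: L1_def)
  have fi: "integrable \<mu> f" using f by (simp add: L1_def)
  have "(\<lambda>i. LINT x|\<mu>. \<bar>s i x - f x\<bar>) \<longlonglongrightarrow> (LINT x|\<mu>. 0)"
  proof (rule integral_dominated_convergence[where w="\<lambda>x. w x + \<bar>f x\<bar>"])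
    show "(\<lambda>x. \<bar>s i x - f x\<bar>) \<in> borel_measurable \<mu>" for i
      using si fi by measurable
    show "integrable \<mu> (\<lambda>x. w x + \<bar>f x\<bar>)" using w fi by simp
    show "AE x in \<mu>. (\<lambda>i. \<bar>s i x - f x\<bar>) \<longlonglongrightarrow> 0"
      using lim by (intro AE_I2 tendsto_rabs_zero LIM_zero)
    show "AE x in \<mu>. norm \<bar>s i x - f x\<bar> \<le> w x + \<bar>f x\<bar>" for i
    proof (rule AE_I2)
      fix x assume "x \<in> space \<mu>"
      then have "\<bar>s i x\<bar> \<le> w x" by (rule dominated)
      then show "norm \<bar>s i x - f x\<bar> \<le> w x + \<bar>f x\<bar>" by simp
    qed
  qed simp
  then have "(\<lambda>i. LINT x|\<mu>. \<bar>s i x - f x\<bar>) \<longlonglongrightarrow> 0" by simp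
  then have lim_bound: "(\<lambda>i. C * (LINT x|\<mu>. \<bar>s i x - f x\<bar>)) \<longlonglongrightarrow> 0"
    by (rule tendsto_mult_right_zero)
  have bound: "\<forall>i. norm (\<phi> (s i) - \<phi> f) \<le> C * (LINT x|\<mu>. \<bar>s i x - f x\<bar>)"
  proof
    fix i
    have "(\<lambda>x. s i x - f x) \<in> L1 \<mu>" using si fi by (simp add: L1_def)
    from C[OF this] show "norm (\<phi> (s i) - \<phi> f) \<le> C * (LINT x|\<mu>. \<bar>s i x - f x\<bar>)"
      by (simp only: L1_dual_diff[OF \<phi> s f] real_norm_def)
  qed
  have "(\<lambda>i. \<phi> (s i) - \<phi> f) \<longlonglongrightarrow> 0"
    using Lim_null_comparison[OF always_eventually[OF bound] lim_bound] .
  then show ?thesis by (rule LIM_zero_cancel)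
qed

lemma L1_dual_eqI:
  assumes \<phi>: "\<phi> \<in> L1_dual \<mu>" and \<psi>: "\<psi> \<in> L1_dual \<mu>"
    and indicator: "\<And>A. A \<in> fmeasurable \<mu> \<Longrightarrow> \<phi> (indicator A) = \<psi> (indicator A)"
    and f: "f \<in> L1 \<mu>"
  shows "\<phi> f = \<psi> f"
proof -
  have "integrable \<mu> f" using f by (simp add: L1_def)
  then show ?thesis
  proof (induct rule: integrable_induct)
    case (base A c)
    have "indicator A \<in> L1 \<mu>" using base by (simp add: L1_def)
    then have scale: "\<theta> (\<lambda>x. indicator A x *\<^sub>R c) = c * \<theta> (indicator A)" if "\<theta> \<in> L1_dual \<mu>" for \<theta>
      using L1_dual_linear[OF that, of "indicator A" "indicator A" c 0] by (simp add: mult.commute)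
    show ?case using scale[OF \<phi>] scale[OF \<psi>] indicator[OF fmeasurableI[OF base]] by simp
  next
    case (add f g)
    then show ?case using L1_dual_add[OF \<phi>] L1_dual_add[OF \<psi>] by (simp add: L1_def)
  next
    case (lim f s)
    have sf: "s i \<in> L1 \<mu>" "f \<in> L1 \<mu>" for i using lim by (simp_all add: L1_def)
    have w: "integrable \<mu> (\<lambda>x. 2 * \<bar>f x\<bar>)" using lim by simp
    have tendsto: "(\<lambda>i. \<theta> (s i)) \<longlonglongrightarrow> \<theta> f" if "\<theta> \<in> L1_dual \<mu>" for \<theta>
    proof (rule L1_dual_tendsto[OF that sf lim(3) w])
      show "\<bar>s i x\<bar> \<le> 2 * \<bar>f x\<bar>" if "x \<in> space \<mu>" for i x
        using lim(4)[OF that] by simp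
    qed
    have "(\<lambda>i. \<phi> (s i)) \<longlonglongrightarrow> \<psi> f" using tendsto[OF \<psi>] lim(2) by simp
    with tendsto[OF \<phi>] show ?case by (rule LIMSEQ_unique)
  qed
qed


lemma dominated_additive_tendsto_Union:
  fixes \<nu> :: "'a set \<Rightarrow> real"
  assumes "finite_measure M"
    and additive: "\<And>A B. A \<in> sets M \<Longrightarrow> B \<in> sets M \<Longrightarrow> A \<inter> B = {} \<Longrightarrow> \<nu> (A \<union> B) = \<nu> A + \<nu> B"
    and dominated: "\<And>A. A \<in> sets M \<Longrightarrow> \<bar>\<nu> A\<bar> \<le> C * measure M A"
    and A: "range A \<subseteq> sets M" "incseq A"
  shows "(\<lambda>i. \<nu> (A i)) \<longlonglongrightarrow> \<nu> (\<Union>i. A i)"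
proof -
  interpret finite_measure M by fact
  have "(\<Union>i. A i) \<in> sets M" using A(1) by auto
  have "(\<lambda>i. C * (measure M (\<Union>i. A i) - measure M (A i))) \<longlonglongrightarrow>
      C * (measure M (\<Union>i. A i) - measure M (\<Union>i. A i))"
    using A by (intro tendsto_mult_left tendsto_diff tendsto_const finite_Lim_measure_incseq)
  then have lim_bound: "(\<lambda>i. C * (measure M (\<Union>i. A i) - measure M (A i))) \<longlonglongrightarrow> 0" by simp
  have bound: "\<forall>i. norm (\<nu> (A i) - \<nu> (\<Union>i. A i)) \<le> C * (measure M (\<Union>i. A i) - measure M (A i))"
  proof
    fix i
    have Ai: "A i \<in> sets M" "A i \<subseteq> (\<Union>i. A i)" using A(1) by auto
    then have "\<nu> (\<Union>i. A i) = \<nu> (A i) + \<nu> ((\<Union>i. A i) - A i)"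
      using additive[of "A i" "(\<Union>i. A i) - A i"] \<open>(\<Union>i. A i) \<in> sets M\<close> by (simp add: Un_absorb1)
    moreover have "measure M ((\<Union>i. A i) - A i) = measure M (\<Union>i. A i) - measure M (A i)"
      using finite_measure_Diff[OF \<open>(\<Union>i. A i) \<in> sets M\<close> Ai] .
    ultimately show "norm (\<nu> (A i) - \<nu> (\<Union>i. A i)) \<le> C * (measure M (\<Union>i. A i) - measure M (A i))"
      using dominated[of "(\<Union>i. A i) - A i"] \<open>(\<Union>i. A i) \<in> sets M\<close> Ai(1) by auto
  qed
  have "(\<lambda>i. \<nu> (A i) - \<nu> (\<Union>i. A i)) \<longlonglongrightarrow> 0"
    using Lim_null_comparison[OF always_eventually[OF bound] lim_bound] .
  then show ?thesis by (rule LIM_zero_cancel)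
qed

lemma dominated_additive_shift_measure:
  fixes \<nu> :: "'a set \<Rightarrow> real"
  assumes "finite_measure M" and "C \<ge> 0"
    and additive: "\<And>A B. A \<in> sets M \<Longrightarrow> B \<in> sets M \<Longrightarrow> A \<inter> B = {} \<Longrightarrow> \<nu> (A \<union> B) = \<nu> A + \<nu> B"
    and dominated: "\<And>A. A \<in> sets M \<Longrightarrow> \<bar>\<nu> A\<bar> \<le> C * measure M A"
  obtains N where "finite_measure N" "sets N = sets M" "absolutely_continuous M N"
    "\<And>A. A \<in> sets M \<Longrightarrow> measure N A = \<nu> A + C * measure M A"
proof -
  interpret finite_measure M by fact
  define r where "r A = \<nu> A + C * measure M A" for A
  have r_nonneg: "0 \<le> r A" if "A \<in> sets M" for A
    using dominated[OF that] unfolding r_def by linarith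
  have positive: "positive (sets M) (\<lambda>A. ennreal (r A))"
    using dominated[of "{}"] unfolding positive_def r_def by simp
  have additive_r: "additive (sets M) (\<lambda>A. ennreal (r A))"
    unfolding additive_def
  proof (intro ballI impI)
    fix A B assume AB: "A \<in> sets M" "B \<in> sets M" "A \<inter> B = {}"
    then have "r (A \<union> B) = r A + r B"
      using additive finite_measure_Union unfolding r_def by (simp add: distrib_left)
    then show "ennreal (r (A \<union> B)) = ennreal (r A) + ennreal (r B)"
      using r_nonneg AB by (simp add: ennreal_plus)
  qed
  have "(\<lambda>i. ennreal (r (A i))) \<longlonglongrightarrow> ennreal (r (\<Union>i. A i))"
    if "range A \<subseteq> sets M" "incseq A" for A :: "nat \<Rightarrow> 'a set"
    unfolding r_def using that
    by (intro tendsto_ennrealI tendsto_add tendsto_mult_left finite_Lim_measure_incseq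
        dominated_additive_tendsto_Union[OF \<open>finite_measure M\<close> additive dominated])
  then have countably_additive: "countably_additive (sets M) (\<lambda>A. ennreal (r A))"
    by (simp add: sets.countably_additive_iff_continuous_from_below[OF positive additive_r])
  define N where "N = measure_of (space M) (sets M) (\<lambda>A. ennreal (r A))"
  have sets_N: "sets N = sets M" and space_N: "space N = space M"
    unfolding N_def by simp_all
  have emeasure_N: "emeasure N A = ennreal (r A)" if "A \<in> sets M" for A
    unfolding N_def
    by (rule emeasure_measure_of_sigma[OF sets.sigma_algebra_axioms positive countably_additive that])
  have "finite_measure N"
    by (rule finite_measureI) (simp add: space_N emeasure_N)
  moreover have "absolutely_continuous M N"
    unfolding absolutely_continuous_def
  proof
    fix A assume "A \<in> null_sets M"
    then have "A \<in> sets M" "measure M A = 0" by (auto simp: measure_def)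
    then have "r A = 0" using dominated[of A] unfolding r_def by simp
    then show "A \<in> null_sets N" using \<open>A \<in> sets M\<close> emeasure_N sets_N by auto
  qed
  moreover have "measure N A = r A" if "A \<in> sets M" for A
    using emeasure_N[OF that] r_nonneg[OF that] by (simp add: measure_def)
  ultimately show ?thesis using that sets_N unfolding r_def by blast
qed

lemma finite_measure_bounded_density:
  fixes \<nu> :: "'a set \<Rightarrow> real"
  assumes "finite_measure M" and "C \<ge> 0"
    and additive: "\<And>A B. A \<in> sets M \<Longrightarrow> B \<in> sets M \<Longrightarrow> A \<inter> B = {} \<Longrightarrow> \<nu> (A \<union> B) = \<nu> A + \<nu> B"
    and dominated: "\<And>A. A \<in> sets M \<Longrightarrow> \<bar>\<nu> A\<bar> \<le> C * measure M A"
  obtains g where "g \<in> borel_measurable M" "AE x in M. \<bar>g x\<bar> \<le> C"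
    "\<And>A. A \<in> sets M \<Longrightarrow> \<nu> A = (LINT x|M. indicator A x * g x)"
proof -
  interpret finite_measure M by fact
  obtain N where "finite_measure N" and sets_N: "sets N = sets M" and ac: "absolutely_continuous M N"
    and measure_N: "\<And>A. A \<in> sets M \<Longrightarrow> measure N A = \<nu> A + C * measure M A"
    using dominated_additive_shift_measure[OF \<open>finite_measure M\<close> \<open>C \<ge> 0\<close> additive dominated] by blast
  interpret N: finite_measure N by fact
  note RN = RN_deriv_integrable[OF N.sigma_finite_measure_axioms ac sets_N]
    RN_deriv_integral[OF N.sigma_finite_measure_axioms ac sets_N]
  define g where "g x = enn2real (RN_deriv M N x) - C" for x
  have g_measurable: "g \<in> borel_measurable M" unfolding g_def by measurable
  have "integrable M (\<lambda>x. enn2real (RN_deriv M N x))" using RN(1)[of "\<lambda>x. 1"] by simp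
  then have g_integrable: "integrable M g" unfolding g_def by simp
  have g_represents: "\<nu> A = (LINT x|M. indicator A x * g x)" if "A \<in> sets M" for A
  proof -
    have "(LINT x|M. indicator A x * g x) = integral\<^sup>L N (indicator A) - (LINT x|M. C * indicator A x)"
      using that RN[of "indicator A"] sets_N
      by (simp add: g_def algebra_simps Bochner_Integration.integral_diff less_top[symmetric])
    also have "\<dots> = \<nu> A"
      using that sets_N measure_N by (simp add: Int_absorb2 sets.sets_into_space)
    finally show ?thesis by simp
  qed
  have "AE x in M. g x \<in> {-C..C}"
  proof (rule averaging_theorem[OF g_integrable])
    fix A assume A: "A \<in> sets M" "measure M A > 0"
    have "\<bar>\<nu> A / measure M A\<bar> \<le> C"
      using dominated[OF A(1)] A(2) by (simp add: abs_divide divide_le_eq)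
    then have "\<nu> A / measure M A \<in> {-C..C}"
      unfolding atLeastAtMost_iff abs_le_iff by linarith
    then show "(1 / measure M A) *\<^sub>R set_lebesgue_integral M A g \<in> {-C..C}"
      using g_represents[OF A(1)] by (simp add: set_lebesgue_integral_def)
  qed simp
  then have "AE x in M. \<bar>g x\<bar> \<le> C" by eventually_elim (simp add: abs_le_iff)
  with g_measurable g_represents show ?thesis using that by blast
qed

lemma L1_dual_restrict:
  assumes \<phi>: "\<phi> \<in> L1_dual \<mu>" and E: "E \<in> sets \<mu>"
  shows "(\<lambda>f. \<phi> (\<lambda>x. indicator E x * f x)) \<in> L1_dual \<mu>"
proof -
  obtain C where C: "\<And>f. f \<in> L1 \<mu> \<Longrightarrow> \<bar>\<phi> f\<bar> \<le> C * (LINT x|\<mu>. \<bar>f x\<bar>)" "C \<ge> 0"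
    using L1_dual_bound[OF \<phi>] by blast
  have restrict_L1: "(\<lambda>x. indicator E x * f x) \<in> L1 \<mu>" if "f \<in> L1 \<mu>" for f
    using integrable_real_mult_indicator[OF E, of f] that by (simp add: L1_def mult.commute)
  have "\<phi> (\<lambda>x. indicator E x * (a * f x + b * h x)) =
      a * \<phi> (\<lambda>x. indicator E x * f x) + b * \<phi> (\<lambda>x. indicator E x * h x)"
    if "f \<in> L1 \<mu>" "h \<in> L1 \<mu>" for f h and a b :: real
    using L1_dual_linear[OF \<phi> restrict_L1[OF that(1)] restrict_L1[OF that(2)], of a b]
    by (simp add: algebra_simps)
  moreover have "\<bar>\<phi> (\<lambda>x. indicator E x * f x)\<bar> \<le> C * (LINT x|\<mu>. \<bar>f x\<bar>)" if "f \<in> L1 \<mu>" for f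
  proof -
    have "integrable \<mu> (\<lambda>x. \<bar>indicator E x * f x\<bar>)" "integrable \<mu> (\<lambda>x. \<bar>f x\<bar>)"
      using restrict_L1[OF that] that unfolding L1_def by (simp_all only: mem_Collect_eq integrable_abs)
    then have "(LINT x|\<mu>. \<bar>indicator E x * f x\<bar>) \<le> (LINT x|\<mu>. \<bar>f x\<bar>)"
      by (rule integral_mono) (simp add: abs_mult indicator_def)
    then show ?thesis using C(1)[OF restrict_L1[OF that]] C(2) by (meson mult_left_mono order_trans)
  qed
  ultimately show ?thesis unfolding L1_dual_def by blast
qed

lemma L1_dual_restrict_representable:
  assumes \<phi>: "\<phi> \<in> L1_dual \<mu>" and E: "E \<in> fmeasurable \<mu>"
  obtains g where "g \<in> Linf \<mu>" "\<And>f. f \<in> L1 \<mu> \<Longrightarrow> \<phi> (\<lambda>x. indicator E x * f x) = pairing \<mu> f g"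
proof -
  obtain C where C: "\<And>f. f \<in> L1 \<mu> \<Longrightarrow> \<bar>\<phi> f\<bar> \<le> C * (LINT x|\<mu>. \<bar>f x\<bar>)" "C \<ge> 0"
    using L1_dual_bound[OF \<phi>] by blast
  have E_sets [measurable]: "E \<in> sets \<mu>" using E by blast
  define M where "M = density \<mu> (indicator E)"
  have sets_M: "sets M = sets \<mu>" unfolding M_def by simp
  have "finite_measure M"
    using E unfolding M_def
    by (intro finite_measureI) (simp add: emeasure_restricted Int_absorb2 sets.sets_into_space fmeasurableD2)
  define \<nu> where "\<nu> A = \<phi> (indicator (E \<inter> A))" for A
  have indicator_L1: "indicator (E \<inter> A) \<in> L1 \<mu>" if "A \<in> sets \<mu>" for A
    using fmeasurable_Int_fmeasurable[OF E that] by (simp add: L1_def fmeasurable_def)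
  have "\<nu> (A \<union> B) = \<nu> A + \<nu> B" if "A \<in> sets M" "B \<in> sets M" "A \<inter> B = {}" for A B
  proof -
    have "indicator (E \<inter> (A \<union> B)) = (\<lambda>x. indicator (E \<inter> A) x + indicator (E \<inter> B) x :: real)"
      using that(3) by (auto simp: indicator_def fun_eq_iff)
    then show ?thesis
      unfolding \<nu>_def using L1_dual_add[OF \<phi> indicator_L1 indicator_L1] that(1,2) sets_M by simp
  qed
  moreover have "\<bar>\<nu> A\<bar> \<le> C * measure M A" if "A \<in> sets M" for A
  proof -
    have A: "A \<in> sets \<mu>" using that sets_M by simp
    then have "E \<inter> A \<inter> space \<mu> = E \<inter> A" using sets.sets_into_space by blast
    then show ?thesis
      using C(1)[OF indicator_L1[OF A]] A unfolding \<nu>_def M_def by (simp add: measure_restricted)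
  qed
  ultimately obtain g0 where g0: "g0 \<in> borel_measurable M" "AE x in M. \<bar>g0 x\<bar> \<le> C"
      "\<And>A. A \<in> sets M \<Longrightarrow> \<nu> A = (LINT x|M. indicator A x * g0 x)"
    using finite_measure_bounded_density[OF \<open>finite_measure M\<close> C(2)] by blast
  define g where "g x = indicator E x * g0 x" for x
  have g0_measurable [measurable]: "g0 \<in> borel_measurable \<mu>"
    using g0(1) measurable_cong_sets[OF sets_M refl] by blast
  have "AE x in \<mu>. \<bar>g x\<bar> \<le> C"
    using g0(2) C(2) unfolding M_def g_def by (subst (asm) AE_density) (auto simp: indicator_def)
  then have g: "g \<in> Linf \<mu>" unfolding Linf_def g_def by auto
  have "\<phi> (\<lambda>x. indicator E x * f x) = pairing \<mu> f g" if "f \<in> L1 \<mu>" for f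
  proof (rule L1_dual_eqI[OF L1_dual_restrict[OF \<phi> E_sets] pairing_in_L1_dual[OF g] _ that])
    fix A assume A: "A \<in> fmeasurable \<mu>"
    have "indicator (E \<inter> A) = (\<lambda>x. indicator E x * indicator A x :: real)"
      by (auto simp: indicator_def)
    then have "\<phi> (\<lambda>x. indicator E x * indicator A x) = \<nu> A" unfolding \<nu>_def by simp
    also have "\<dots> = (LINT x|M. indicator A x * g0 x)" using g0(3) A sets_M by auto
    also have "\<dots> = (LINT x|\<mu>. indicator E x * (indicator A x * g0 x))"
    proof -
      have "M = density \<mu> (\<lambda>x. ennreal (indicator E x))"
        unfolding M_def by (simp add: ennreal_indicator)
      also have "integral\<^sup>L \<dots> (\<lambda>x. indicator A x * g0 x) = (LINT x|\<mu>. indicator E x * (indicator A x * g0 x))"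
        using A by (subst integral_density) auto
      finally show ?thesis .
    qed
    also have "\<dots> = pairing \<mu> (indicator A) g"
      unfolding pairing_def g_def by (simp add: algebra_simps)
    finally show "\<phi> (\<lambda>x. indicator E x * indicator A x) = pairing \<mu> (indicator A) g" .
  qed
  with g show ?thesis using that by blast
qed


section \<open>Uniform concentration of \<open>\<sigma>(L\<^sup>1, L\<^sup>\<infinity>)\<close>-compact sets\<close>

definition tail_norm :: "'a measure \<Rightarrow> 'a set \<Rightarrow> ('a \<Rightarrow> real) \<Rightarrow> real" where
  "tail_norm \<mu> E f = (LINT x|\<mu>. (1 - indicator E x) * \<bar>f x\<bar>)"

lemma integrable_tail_norm:
  fixes f :: "'a \<Rightarrow> real"
  assumes "integrable \<mu> f" "E \<in> sets \<mu>"
  shows "integrable \<mu> (\<lambda>x. (1 - indicator E x) * \<bar>f x\<bar>)"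
proof -
  have "(\<lambda>x. (1 - indicator E x) * \<bar>f x\<bar>) = (\<lambda>x. \<bar>f x\<bar> - \<bar>f x\<bar> * indicator E x)"
    by (simp add: algebra_simps)
  then show ?thesis
    using assms by (simp add: integrable_real_mult_indicator)
qed

lemma tail_norm_antimono:
  fixes f :: "'a \<Rightarrow> real"
  assumes "integrable \<mu> f" "E \<in> sets \<mu>" "E' \<in> sets \<mu>" "E \<subseteq> E'"
  shows "tail_norm \<mu> E' f \<le> tail_norm \<mu> E f"
  unfolding tail_norm_def
  using assms by (intro integral_mono integrable_tail_norm) (auto simp: indicator_def)

lemma abs_pairing_outside_le_tail_norm:
  assumes f: "integrable \<mu> f" and E: "E \<in> sets \<mu>"
    and v: "v \<in> borel_measurable \<mu>" "\<And>x. \<bar>v x\<bar> \<le> 1"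
  shows "\<bar>pairing \<mu> f (\<lambda>x. (1 - indicator E x) * v x)\<bar> \<le> tail_norm \<mu> E f"
proof -
  have "(\<lambda>x. (1 - indicator E x) * v x) \<in> Linf \<mu>"
    using E v by (intro bounded_measurable_in_Linf[where C=1]) (auto simp: indicator_def)
  with f have "integrable \<mu> (\<lambda>x. f x * ((1 - indicator E x) * v x))"
    by (rule integrable_mult_Linf)
  moreover have "\<bar>f x * ((1 - indicator E x) * v x)\<bar> \<le> (1 - indicator E x) * \<bar>f x\<bar>" for x
    using v(2)[of x] by (auto simp: indicator_def abs_mult intro: mult_left_le)
  ultimately have "(LINT x|\<mu>. \<bar>f x * ((1 - indicator E x) * v x)\<bar>) \<le> tail_norm \<mu> E f"
    unfolding tail_norm_def using f E by (intro integral_mono integrable_tail_norm) auto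
  moreover have "\<bar>pairing \<mu> f (\<lambda>x. (1 - indicator E x) * v x)\<bar> \<le>
      (LINT x|\<mu>. \<bar>f x * ((1 - indicator E x) * v x)\<bar>)"
    unfolding pairing_def by (rule integral_abs_bound)
  ultimately show ?thesis by linarith
qed

lemma integrable_tail_norm_small:
  fixes f :: "'a \<Rightarrow> real"
  assumes f: "integrable \<mu> f" and "\<delta> > 0"
  obtains E where "E \<in> fmeasurable \<mu>" "tail_norm \<mu> E f \<le> \<delta>"
proof -
  define E where "E n = {x\<in>space \<mu>. 1 / real (Suc n) \<le> \<bar>f x\<bar>}" for n
  have [measurable]: "f \<in> borel_measurable \<mu>" using f by (rule borel_measurable_integrable)
  have E_sets: "E n \<in> sets \<mu>" for n unfolding E_def by measurable
  have E_finite: "emeasure \<mu> (E n) < \<infinity>" for n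
  proof -
    have "emeasure \<mu> (E n) \<le> real (Suc n) * (LINT x|\<mu>. \<bar>f x\<bar>)"
      unfolding E_def using integral_Markov_inequality[of \<mu> "\<lambda>x. \<bar>f x\<bar>" "1 / real (Suc n)"] f
      by simp
    then show ?thesis using le_less_trans by fastforce
  qed
  have "(\<lambda>n. tail_norm \<mu> (E n) f) \<longlonglongrightarrow> (LINT x|\<mu>. 0)"
    unfolding tail_norm_def
  proof (rule integral_dominated_convergence[where w="\<lambda>x. \<bar>f x\<bar>"])
    show "(\<lambda>x. (1 - indicator (E n) x) * \<bar>f x\<bar>) \<in> borel_measurable \<mu>" for n
      using E_sets[of n] by measurable
    show "AE x in \<mu>. (\<lambda>n. (1 - indicator (E n) x) * \<bar>f x\<bar>) \<longlonglongrightarrow> 0"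
    proof (rule AE_I2)
      fix x assume x: "x \<in> space \<mu>"
      show "(\<lambda>n. (1 - indicator (E n) x) * \<bar>f x\<bar>) \<longlonglongrightarrow> 0"
      proof (cases "f x = 0")
        case False
        then obtain N where N: "1 / real (Suc N) < \<bar>f x\<bar>"
          using nat_approx_posE[of "\<bar>f x\<bar>"] by auto
        have "x \<in> E n" if "n \<ge> N" for n
        proof -
          have "1 / real (Suc n) \<le> 1 / real (Suc N)" using that by (intro divide_left_mono) auto
          then show ?thesis using N x unfolding E_def by simp
        qed
        then have "\<forall>\<^sub>F n in sequentially. (1 - indicator (E n) x) * \<bar>f x\<bar> = 0"
          unfolding eventually_sequentially by (intro exI[of _ N]) simp
        then show ?thesis by (rule tendsto_eventually)
      qed simp
    qed
  qed (use f in \<open>auto simp: indicator_def\<close>)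
  then have "\<forall>\<^sub>F n in sequentially. tail_norm \<mu> (E n) f < \<delta>"
    using \<open>\<delta> > 0\<close> by (intro order_tendstoD(2)) simp_all
  then obtain n where "tail_norm \<mu> (E n) f < \<delta>" by (auto simp: eventually_sequentially)
  then show ?thesis using that E_sets E_finite by (meson fmeasurableI less_imp_le)
qed


text \<open>The gliding hump: \<open>f n\<close> has \<open>L\<^sup>1\<close>-mass \<open>> \<epsilon> - \<delta>\<close> on \<open>E (Suc n) - F n\<close>, where \<open>c\<close> has
  almost none, and \<open>f n\<close> is \<open>\<delta>\<close>-close to \<open>c\<close> against the sign patterns \<open>\<sigma> m\<close> of the earlier
  humps.  Against the total sign pattern \<open>hump_sign\<close> every \<open>f n\<close> is then far from \<open>c\<close>, so the
  \<open>f n\<close> have no weak cluster point.\<close>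
locale gliding_hump =
  fixes \<mu> :: "'a measure" and c :: "'a \<Rightarrow> real" and f :: "nat \<Rightarrow> 'a \<Rightarrow> real"
    and E F :: "nat \<Rightarrow> 'a set" and \<sigma> :: "nat \<Rightarrow> 'a \<Rightarrow> real" and \<epsilon> \<delta> :: real
  assumes integrable_c: "integrable \<mu> c" and integrable_f: "\<And>n. integrable \<mu> (f n)"
    and sets_E: "\<And>n. E n \<in> sets \<mu>" and sets_F: "\<And>n. F n \<in> sets \<mu>"
    and E_subset_F: "\<And>n. E n \<subseteq> F n" and F_subset_E: "\<And>n. F n \<subseteq> E (Suc n)"
    and tail_c: "\<And>n. tail_norm \<mu> (F n) c \<le> \<delta>"
    and tail_f_F: "\<And>n. \<epsilon> < tail_norm \<mu> (F n) (f n)"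
    and tail_f_E: "\<And>n. tail_norm \<mu> (E (Suc n)) (f n) \<le> \<delta>"
    and \<sigma>_0: "\<sigma> 0 = (\<lambda>x. 0)"
    and \<sigma>_Suc: "\<And>n. \<sigma> (Suc n) = (\<lambda>x. \<sigma> n x + indicator (E (Suc n) - F n) x * sgn (f n x))"
    and close: "\<And>m n. m \<le> n \<Longrightarrow> \<bar>pairing \<mu> (f n) (\<sigma> m) - pairing \<mu> c (\<sigma> m)\<bar> < \<delta>"
begin

lemma E_mono: "m \<le> n \<Longrightarrow> E m \<subseteq> E n"
  by (rule lift_Suc_mono_le[of E]) (rule subset_trans[OF E_subset_F F_subset_E])

lemma \<sigma>_outside: "x \<notin> E n \<Longrightarrow> \<sigma> n x = 0"
proof (induction n)
  case (Suc n)
  then have "x \<notin> E n" using E_mono[of n "Suc n"] by auto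
  then show ?case using Suc by (simp add: \<sigma>_Suc)
qed (simp add: \<sigma>_0)

lemma \<sigma>_bounded: "\<bar>\<sigma> n x\<bar> \<le> 1"
proof (induction n)
  case (Suc n)
  show ?case
  proof (cases "x \<in> E (Suc n) - F n")
    case True
    then have "\<sigma> n x = 0" using E_subset_F \<sigma>_outside by blast
    with True show ?thesis by (simp add: \<sigma>_Suc sgn_if)
  qed (use Suc in \<open>simp add: \<sigma>_Suc\<close>)
qed (simp add: \<sigma>_0)

lemma \<sigma>_measurable [measurable]: "\<sigma> n \<in> borel_measurable \<mu>"
proof (induction n)
  case (Suc n)
  have [measurable]: "E (Suc n) \<in> sets \<mu>" "F n \<in> sets \<mu>" "f n \<in> borel_measurable \<mu>"
    using sets_E sets_F integrable_f by auto
  show ?case unfolding \<sigma>_Suc using Suc by measurable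
qed (simp add: \<sigma>_0)

lemma \<sigma>_Linf: "\<sigma> n \<in> Linf \<mu>"
  using \<sigma>_measurable \<sigma>_bounded by (rule bounded_measurable_in_Linf)

lemma \<sigma>_stable:
  assumes "x \<in> E m" "m \<le> n"
  shows "\<sigma> n x = \<sigma> m x"
  using assms(2)
proof (induction n rule: dec_induct)
  case (step k)
  then have "x \<notin> E (Suc k) - F k" using assms(1) E_mono[of m k] E_subset_F by blast
  then show ?case using step by (simp add: \<sigma>_Suc)
qed simp

definition hump_sign :: "'a \<Rightarrow> real" where
  "hump_sign x = lim (\<lambda>n. \<sigma> n x)"

lemma \<sigma>_eventually_const: "x \<in> E n \<Longrightarrow> (\<lambda>m. \<sigma> m x) \<longlonglongrightarrow> \<sigma> n x"
  by (rule tendsto_eventually) (auto simp: eventually_sequentially intro: \<sigma>_stable)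

lemma \<sigma>_tendsto: "(\<lambda>n. \<sigma> n x) \<longlonglongrightarrow> hump_sign x"
proof -
  have "convergent (\<lambda>n. \<sigma> n x)"
  proof (cases "\<exists>n. x \<in> E n")
    case True
    then show ?thesis using \<sigma>_eventually_const unfolding convergent_def by blast
  next
    case False
    then show ?thesis using \<sigma>_outside by (simp add: convergent_const)
  qed
  then show ?thesis unfolding hump_sign_def by (simp add: convergent_LIMSEQ_iff)
qed

lemma hump_sign_eq_\<sigma>: "x \<in> E n \<Longrightarrow> hump_sign x = \<sigma> n x"
  using LIMSEQ_unique[OF \<sigma>_tendsto \<sigma>_eventually_const] .

lemma hump_sign_outside: "(\<And>n. x \<notin> E n) \<Longrightarrow> hump_sign x = 0"
  using \<sigma>_tendsto[of x] \<sigma>_outside by (simp add: LIMSEQ_const_iff)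

lemma hump_sign_measurable [measurable]: "hump_sign \<in> borel_measurable \<mu>"
  by (rule borel_measurable_LIMSEQ_real[OF \<sigma>_tendsto \<sigma>_measurable])

lemma hump_sign_bounded: "\<bar>hump_sign x\<bar> \<le> 1"
  by (rule tendsto_upperbound[OF tendsto_rabs[OF \<sigma>_tendsto]]) (simp_all add: \<sigma>_bounded)

lemma outside_hump_sign_Linf: "B \<in> sets \<mu> \<Longrightarrow> (\<lambda>x. (1 - indicator B x) * hump_sign x) \<in> Linf \<mu>"
  using hump_sign_bounded by (intro bounded_measurable_in_Linf[where C=1]) (auto simp: indicator_def)

lemma hump_sign_Linf: "hump_sign \<in> Linf \<mu>"
  using hump_sign_measurable hump_sign_bounded by (rule bounded_measurable_in_Linf)

lemma hump_sign_split_E: "hump_sign x = \<sigma> n x + (1 - indicator (E n) x) * hump_sign x"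
  by (cases "x \<in> E n") (simp_all add: hump_sign_eq_\<sigma> \<sigma>_outside)

lemma hump_sign_split_F: "hump_sign x = \<sigma> n x + (1 - indicator (F n) x) * hump_sign x"
proof -
  consider "x \<in> E n" | "x \<in> F n - E n" | "x \<notin> F n" by blast
  then show ?thesis
  proof cases
    case 1
    then have "x \<in> F n" using E_subset_F by blast
    then show ?thesis using hump_sign_eq_\<sigma>[OF 1] by simp
  next
    case 2
    then have "x \<in> E (Suc n)" "x \<notin> E (Suc n) - F n" using F_subset_E by auto
    then have "hump_sign x = \<sigma> n x" by (simp add: hump_sign_eq_\<sigma>[of x "Suc n"] \<sigma>_Suc)
    then show ?thesis using 2 \<sigma>_outside by simp
  next
    case 3
    then show ?thesis using E_subset_F \<sigma>_outside[of x n] by auto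
  qed
qed

lemma hump_sign_split_hump:
  "(1 - indicator (F n) x) * hump_sign x =
     indicator (E (Suc n) - F n) x * sgn (f n x) + (1 - indicator (E (Suc n)) x) * hump_sign x"
proof (cases "x \<in> E (Suc n) - F n")
  case True
  then have "\<sigma> n x = 0" using E_subset_F \<sigma>_outside by blast
  then show ?thesis using True by (simp add: hump_sign_eq_\<sigma>[of x "Suc n"] \<sigma>_Suc)
qed (use F_subset_E in \<open>auto simp: indicator_def\<close>)

lemma pairing_hump:
  "pairing \<mu> (f n) (\<lambda>x. indicator (E (Suc n) - F n) x * sgn (f n x)) =
     tail_norm \<mu> (F n) (f n) - tail_norm \<mu> (E (Suc n)) (f n)"
proof -
  let ?D = "E (Suc n) - F n"
  have D: "?D \<in> sets \<mu>" using sets_E sets_F by auto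
  have "(\<lambda>x. (1 - indicator (F n) x) * \<bar>f n x\<bar>) =
      (\<lambda>x. \<bar>f n x\<bar> * indicator ?D x + (1 - indicator (E (Suc n)) x) * \<bar>f n x\<bar>)"
    using F_subset_E[of n] by (auto simp: indicator_def fun_eq_iff)
  then have "tail_norm \<mu> (F n) (f n) =
      (LINT x|\<mu>. \<bar>f n x\<bar> * indicator ?D x) + tail_norm \<mu> (E (Suc n)) (f n)"
    unfolding tail_norm_def using integrable_f sets_E D
    by (simp add: integrable_tail_norm integrable_real_mult_indicator)
  moreover have "(\<lambda>x. f n x * (indicator ?D x * sgn (f n x))) = (\<lambda>x. \<bar>f n x\<bar> * indicator ?D x)"
    by (auto simp: fun_eq_iff indicator_def sgn_if abs_if)
  ultimately show ?thesis unfolding pairing_def by simp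
qed

lemma pairing_hump_sign_lower: "\<epsilon> - 4 * \<delta> \<le> pairing \<mu> (f n) hump_sign - pairing \<mu> c hump_sign"
proof -
  have L1: "f n \<in> L1 \<mu>" "c \<in> L1 \<mu>" using integrable_f integrable_c by (simp_all add: L1_def)
  have hump_Linf: "(\<lambda>x. indicator (E (Suc n) - F n) x * sgn (f n x)) \<in> Linf \<mu>"
    using sets_E sets_F integrable_f
    by (intro bounded_measurable_in_Linf[where C=1]) (auto simp: indicator_def sgn_if)
  have "pairing \<mu> (f n) hump_sign = pairing \<mu> (f n) (\<sigma> n) + (tail_norm \<mu> (F n) (f n) -
      tail_norm \<mu> (E (Suc n)) (f n)) + pairing \<mu> (f n) (\<lambda>x. (1 - indicator (E (Suc n)) x) * hump_sign x)"
    using pairing_add_right[OF L1(1) \<sigma>_Linf outside_hump_sign_Linf[OF sets_F[of n]] hump_sign_split_F]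
      pairing_add_right[OF L1(1) hump_Linf outside_hump_sign_Linf[OF sets_E[of "Suc n"]] hump_sign_split_hump]
    by (simp add: pairing_hump)
  moreover have "pairing \<mu> c hump_sign =
      pairing \<mu> c (\<sigma> n) + pairing \<mu> c (\<lambda>x. (1 - indicator (F n) x) * hump_sign x)"
    by (rule pairing_add_right[OF L1(2) \<sigma>_Linf outside_hump_sign_Linf[OF sets_F[of n]] hump_sign_split_F])
  moreover have "\<bar>pairing \<mu> (f n) (\<lambda>x. (1 - indicator (E (Suc n)) x) * hump_sign x)\<bar> \<le> \<delta>"
    using abs_pairing_outside_le_tail_norm[OF integrable_f[of n] sets_E[of "Suc n"] hump_sign_measurable hump_sign_bounded]
      tail_f_E[of n] by linarith
  moreover have "\<bar>pairing \<mu> c (\<lambda>x. (1 - indicator (F n) x) * hump_sign x)\<bar> \<le> \<delta>"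
    using abs_pairing_outside_le_tail_norm[OF integrable_c sets_F[of n] hump_sign_measurable hump_sign_bounded]
      tail_c[of n] by linarith
  moreover have "\<bar>pairing \<mu> (f n) (\<sigma> n) - pairing \<mu> c (\<sigma> n)\<bar> < \<delta>" by (rule close) simp
  ultimately show ?thesis using tail_f_F[of n] tail_f_E[of n] by (simp add: abs_le_iff abs_less_iff)
qed

lemma pairing_outside_E_tendsto:
  assumes h: "integrable \<mu> h"
  shows "(\<lambda>n. pairing \<mu> h (\<lambda>x. (1 - indicator (E n) x) * hump_sign x)) \<longlonglongrightarrow> 0"
proof -
  have [measurable]: "h \<in> borel_measurable \<mu>" "E n \<in> sets \<mu>" for n
    using h sets_E by auto
  have "(\<lambda>n. LINT x|\<mu>. h x * ((1 - indicator (E n) x) * hump_sign x)) \<longlonglongrightarrow> (LINT x|\<mu>. 0)"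
  proof (rule integral_dominated_convergence[where w="\<lambda>x. \<bar>h x\<bar>"])
    show "AE x in \<mu>. (\<lambda>n. h x * ((1 - indicator (E n) x) * hump_sign x)) \<longlonglongrightarrow> 0"
    proof (rule AE_I2)
      fix x
      show "(\<lambda>n. h x * ((1 - indicator (E n) x) * hump_sign x)) \<longlonglongrightarrow> 0"
      proof (cases "\<exists>m. x \<in> E m")
        case True
        then obtain m where "x \<in> E m" by blast
        then have "x \<in> E n" if "n \<ge> m" for n using E_mono[OF that] by blast
        then have "\<forall>\<^sub>F n in sequentially. h x * ((1 - indicator (E n) x) * hump_sign x) = 0"
          unfolding eventually_sequentially by (intro exI[of _ m]) simp
        then show ?thesis by (rule tendsto_eventually)
      qed (simp add: hump_sign_outside)
    qed
    show "AE x in \<mu>. norm (h x * ((1 - indicator (E n) x) * hump_sign x)) \<le> \<bar>h x\<bar>" for n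
      using hump_sign_bounded
      by (intro AE_I2) (auto simp: indicator_def abs_mult intro: mult_left_le)
  qed (use h in simp_all)
  then show ?thesis unfolding pairing_def by simp
qed

lemma no_weak_cluster_point:
  assumes "5 * \<delta> < \<epsilon>" and c': "integrable \<mu> c'"
    and cluster: "\<And>i G d. finite G \<Longrightarrow> G \<subseteq> Linf \<mu> \<Longrightarrow> d > 0 \<Longrightarrow>
      \<exists>j\<ge>i. \<forall>g\<in>G. \<bar>pairing \<mu> (f j) g - pairing \<mu> c' g\<bar> < d"
  shows False
proof -
  define \<eta> where "\<eta> = (\<epsilon> - 5 * \<delta>) / 4"
  have "\<eta> > 0" using assms(1) unfolding \<eta>_def by simp
  let ?rest = "\<lambda>n x. (1 - indicator (E n) x) * hump_sign x"
  have "\<forall>\<^sub>F n in sequentially. \<bar>pairing \<mu> c' (?rest n)\<bar> < \<eta> \<and> \<bar>pairing \<mu> c (?rest n)\<bar> < \<eta>"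
    using \<open>\<eta> > 0\<close> pairing_outside_E_tendsto[OF c'] pairing_outside_E_tendsto[OF integrable_c]
    by (intro eventually_conj order_tendstoD(2)[OF tendsto_rabs_zero]) auto
  then obtain n where rest: "\<bar>pairing \<mu> c' (?rest n)\<bar> < \<eta>" "\<bar>pairing \<mu> c (?rest n)\<bar> < \<eta>"
    by (auto simp: eventually_sequentially)
  obtain j where "j \<ge> n" and j: "\<forall>g\<in>{hump_sign, \<sigma> n}. \<bar>pairing \<mu> (f j) g - pairing \<mu> c' g\<bar> < \<eta>"
    using cluster[of "{hump_sign, \<sigma> n}" \<eta> n] \<open>\<eta> > 0\<close> hump_sign_Linf \<sigma>_Linf by auto
  have "pairing \<mu> h hump_sign = pairing \<mu> h (\<sigma> n) + pairing \<mu> h (?rest n)" if "integrable \<mu> h" for h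
    using that by (intro pairing_add_right[OF _ \<sigma>_Linf outside_hump_sign_Linf[OF sets_E]] hump_sign_split_E)
      (simp add: L1_def)
  then have "pairing \<mu> c' hump_sign = pairing \<mu> c' (\<sigma> n) + pairing \<mu> c' (?rest n)"
    "pairing \<mu> c hump_sign = pairing \<mu> c (\<sigma> n) + pairing \<mu> c (?rest n)"
    using c' integrable_c by auto
  moreover have "\<bar>pairing \<mu> (f j) (\<sigma> n) - pairing \<mu> c (\<sigma> n)\<bar> < \<delta>"
    using close \<open>j \<ge> n\<close> by blast
  moreover have "\<bar>pairing \<mu> (f j) hump_sign - pairing \<mu> c' hump_sign\<bar> < \<eta>"
    "\<bar>pairing \<mu> (f j) (\<sigma> n) - pairing \<mu> c' (\<sigma> n)\<bar> < \<eta>"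
    using j by auto
  moreover note pairing_hump_sign_lower[of j] rest
  ultimately show False unfolding \<eta>_def abs_less_iff by argo
qed

end

lemma gliding_hump_step:
  assumes K: "\<And>f. f \<in> K \<Longrightarrow> integrable \<mu> f" and c: "integrable \<mu> c" and "\<delta> > 0"
    and near: "\<And>A. A \<in> fmeasurable \<mu> \<Longrightarrow>
      \<exists>f\<in>K. \<epsilon> < tail_norm \<mu> A f \<and> (\<forall>g\<in>G. \<bar>pairing \<mu> f g - pairing \<mu> c g\<bar> < \<delta>)"
    and E: "E \<in> fmeasurable \<mu>"
  obtains f F E' where "f \<in> K" "E \<subseteq> F" "F \<subseteq> E'" "F \<in> sets \<mu>" "E' \<in> fmeasurable \<mu>"
    "tail_norm \<mu> F c \<le> \<delta>" "\<epsilon> < tail_norm \<mu> F f" "tail_norm \<mu> E' f \<le> \<delta>"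
    "\<forall>g\<in>G. \<bar>pairing \<mu> f g - pairing \<mu> c g\<bar> < \<delta>"
proof -
  obtain Ec where "Ec \<in> fmeasurable \<mu>" "tail_norm \<mu> Ec c \<le> \<delta>"
    using integrable_tail_norm_small[OF c \<open>\<delta> > 0\<close>] by blast
  moreover define F where "F = E \<union> Ec"
  ultimately have F: "F \<in> fmeasurable \<mu>" "tail_norm \<mu> F c \<le> \<delta>"
    using E tail_norm_antimono[OF c, of Ec F] by auto
  obtain f where f: "f \<in> K" "\<epsilon> < tail_norm \<mu> F f" "\<forall>g\<in>G. \<bar>pairing \<mu> f g - pairing \<mu> c g\<bar> < \<delta>"
    using near[OF F(1)] by blast
  obtain Ef where "Ef \<in> fmeasurable \<mu>" "tail_norm \<mu> Ef f \<le> \<delta>"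
    using integrable_tail_norm_small[OF K[OF f(1)] \<open>\<delta> > 0\<close>] by blast
  moreover define E' where "E' = F \<union> Ef"
  ultimately have "E' \<in> fmeasurable \<mu>" "tail_norm \<mu> E' f \<le> \<delta>"
    using F tail_norm_antimono[OF K[OF f(1)], of Ef E'] by auto
  then show ?thesis using that f F unfolding F_def E'_def by blast
qed

text \<open>The sign patterns \<open>\<sigma>\<close> and the finite sets \<open>G\<close> of test functions that the next \<open>f\<close> has to
  respect are built along with the sets, hence the dependent choice over triples \<open>(E n, \<sigma> n, G n)\<close>.\<close>
lemma gliding_hump_exists:
  assumes K: "\<And>f. f \<in> K \<Longrightarrow> integrable \<mu> f" and c: "integrable \<mu> c" and "\<delta> > 0"
    and near: "\<And>E G. E \<in> fmeasurable \<mu> \<Longrightarrow> finite G \<Longrightarrow> G \<subseteq> Linf \<mu> \<Longrightarrow>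
      \<exists>f\<in>K. \<epsilon> < tail_norm \<mu> E f \<and> (\<forall>g\<in>G. \<bar>pairing \<mu> f g - pairing \<mu> c g\<bar> < \<delta>)"
  obtains f E F \<sigma> where "gliding_hump \<mu> c f E F \<sigma> \<epsilon> \<delta>" "\<And>n. f n \<in> K"
proof -
  define step where "step E G f F E' \<longleftrightarrow> f \<in> K \<and> E \<subseteq> F \<and> F \<subseteq> E' \<and> F \<in> sets \<mu> \<and>
      tail_norm \<mu> F c \<le> \<delta> \<and> \<epsilon> < tail_norm \<mu> F f \<and> tail_norm \<mu> E' f \<le> \<delta> \<and>
      (\<forall>g\<in>G. \<bar>pairing \<mu> f g - pairing \<mu> c g\<bar> < \<delta>)" for E G f F E'
  define P where "P n = (\<lambda>(E, \<sigma>, G). E \<in> fmeasurable \<mu> \<and> finite G \<and> G \<subseteq> Linf \<mu> \<and> \<sigma> \<in> G \<and>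
      (n = 0 \<longrightarrow> E = {} \<and> \<sigma> = (\<lambda>x. 0)))" for n :: nat
  define Q where "Q = (\<lambda>(E, \<sigma>, G) (E', \<sigma>', G'). \<exists>f F. step E G f F E' \<and>
      \<sigma>' = (\<lambda>x. \<sigma> x + indicator (E' - F) x * sgn (f x)) \<and> G' = insert \<sigma>' G)"
  have "\<exists>st. \<forall>n. P n (st n) \<and> Q (st n) (st (Suc n))"
  proof (rule dependent_nat_choice)
    have "(\<lambda>x. 0::real) \<in> Linf \<mu>" by (rule bounded_measurable_in_Linf[where C=0]) auto
    then show "\<exists>x. P 0 x" unfolding P_def by (intro exI[of _ "({}, \<lambda>x. 0, {\<lambda>x. 0})"]) auto
  next
    fix x n assume "P n x"
    then obtain E \<sigma> G where x: "x = (E, \<sigma>, G)" and E: "E \<in> fmeasurable \<mu>"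
        and G: "finite G" "G \<subseteq> Linf \<mu>" "\<sigma> \<in> G"
      unfolding P_def by auto
    obtain f F E' where "step E G f F E'" "E' \<in> fmeasurable \<mu>"
      using gliding_hump_step[OF K c \<open>\<delta> > 0\<close> near[OF _ G(1,2)] E] unfolding step_def by metis
    moreover define \<sigma>' where "\<sigma>' = (\<lambda>x. \<sigma> x + indicator (E' - F) x * sgn (f x))"
    moreover have "(\<lambda>x. indicator (E' - F) x * sgn (f x)) \<in> Linf \<mu>"
      using calculation(1,2) K[of f] unfolding step_def
      by (intro bounded_measurable_in_Linf[where C=1]) (auto simp: indicator_def sgn_if)
    ultimately have "P (Suc n) (E', \<sigma>', insert \<sigma>' G)" "Q x (E', \<sigma>', insert \<sigma>' G)"
      using G Linf_add[of \<sigma> \<mu>] unfolding P_def Q_def x by auto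
    then show "\<exists>y. P (Suc n) y \<and> Q x y" by blast
  qed
  then obtain st where st: "\<And>n. P n (st n)" "\<And>n. Q (st n) (st (Suc n))" by blast
  define E where "E n = fst (st n)" for n
  define \<sigma> where "\<sigma> n = fst (snd (st n))" for n
  define G where "G n = snd (snd (st n))" for n
  have st_eq: "st n = (E n, \<sigma> n, G n)" for n unfolding E_def \<sigma>_def G_def by simp
  have "\<forall>n. \<exists>f F. step (E n) (G n) f F (E (Suc n)) \<and>
      \<sigma> (Suc n) = (\<lambda>x. \<sigma> n x + indicator (E (Suc n) - F) x * sgn (f x)) \<and>
      G (Suc n) = insert (\<sigma> (Suc n)) (G n)"
    using st(2) unfolding Q_def st_eq by simp
  then obtain f F where "\<And>n. step (E n) (G n) (f n) (F n) (E (Suc n))"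
    and \<sigma>_Suc: "\<And>n. \<sigma> (Suc n) = (\<lambda>x. \<sigma> n x + indicator (E (Suc n) - F n) x * sgn (f n x))"
    and G_Suc: "\<And>n. G (Suc n) = insert (\<sigma> (Suc n)) (G n)"
    by metis
  then have f: "\<And>n. f n \<in> K" and close: "\<And>n. \<forall>g\<in>G n. \<bar>pairing \<mu> (f n) g - pairing \<mu> c g\<bar> < \<delta>"
    and hump: "\<And>n. step (E n) (G n) (f n) (F n) (E (Suc n))"
    unfolding step_def by auto
  have P: "E n \<in> fmeasurable \<mu>" "\<sigma> n \<in> G n" "\<sigma> 0 = (\<lambda>x. 0)" for n
    using st(1)[of n] st(1)[of 0] unfolding P_def st_eq by auto
  have G_mono: "G m \<subseteq> G n" if "m \<le> n" for m n
    using lift_Suc_mono_le[of G, OF _ that] G_Suc by blast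
  have "gliding_hump \<mu> c f E F \<sigma> \<epsilon> \<delta>"
  proof
    show "\<bar>pairing \<mu> (f n) (\<sigma> m) - pairing \<mu> c (\<sigma> m)\<bar> < \<delta>" if "m \<le> n" for m n
      using close[of n] P(2)[of m] G_mono[OF that] by blast
  qed (use hump \<sigma>_Suc P K c in \<open>auto simp: step_def\<close>)
  then show ?thesis using that f by blast
qed

lemma compactin_weak_L1_not_tight_cluster_point:
  assumes K: "compactin (weak_topology (L1 \<mu>) (Linf \<mu>) (pairing \<mu>)) K"
    and not_tight: "\<And>E. E \<in> fmeasurable \<mu> \<Longrightarrow> \<exists>f\<in>K. \<epsilon> < tail_norm \<mu> E f"
  obtains c where "c \<in> K" "\<And>E G \<delta>. E \<in> fmeasurable \<mu> \<Longrightarrow> finite G \<Longrightarrow> G \<subseteq> Linf \<mu> \<Longrightarrow> \<delta> > 0 \<Longrightarrow>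
    \<exists>f\<in>K. \<epsilon> < tail_norm \<mu> E f \<and> (\<forall>g\<in>G. \<bar>pairing \<mu> f g - pairing \<mu> c g\<bar> < \<delta>)"
proof -
  define A where "A E = {f\<in>K. \<epsilon> < tail_norm \<mu> E f}" for E
  have A: "A E \<subseteq> K" for E unfolding A_def by blast
  have fip: "\<exists>f\<in>K. \<forall>E\<in>J. f \<in> A E" if J: "finite J" "J \<subseteq> fmeasurable \<mu>" for J
  proof -
    from J have "\<Union>J \<in> fmeasurable \<mu>" by (rule fmeasurable.finite_Union)
    then obtain f where f: "f \<in> K" "\<epsilon> < tail_norm \<mu> (\<Union>J) f" using not_tight by blast
    then have "integrable \<mu> f" using compactin_subset_topspace[OF K] by (auto simp: L1_def)
    then have "tail_norm \<mu> (\<Union>J) f \<le> tail_norm \<mu> E f" if "E \<in> J" for E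
      using that J \<open>\<Union>J \<in> fmeasurable \<mu>\<close> by (intro tail_norm_antimono) auto
    with f show ?thesis unfolding A_def by force
  qed
  obtain c where "c \<in> K" and c: "\<And>E G \<delta>. E \<in> fmeasurable \<mu> \<Longrightarrow> finite G \<Longrightarrow> G \<subseteq> Linf \<mu> \<Longrightarrow>
      \<delta> > 0 \<Longrightarrow> \<exists>f\<in>A E. \<forall>g\<in>G. \<bar>pairing \<mu> f g - pairing \<mu> c g\<bar> < \<delta>"
    using compactin_weak_topology_cluster_point[where A = A and I = "fmeasurable \<mu>", OF K A fip] by blast
  have "\<exists>f\<in>K. \<epsilon> < tail_norm \<mu> E f \<and> (\<forall>g\<in>G. \<bar>pairing \<mu> f g - pairing \<mu> c g\<bar> < \<delta>)"
    if "E \<in> fmeasurable \<mu>" "finite G" "G \<subseteq> Linf \<mu>" "\<delta> > 0" for E G \<delta>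
    using c[OF that] unfolding A_def by blast
  with \<open>c \<in> K\<close> show ?thesis by (rule that)
qed

theorem compactin_weak_L1_tight:
  assumes K: "compactin (weak_topology (L1 \<mu>) (Linf \<mu>) (pairing \<mu>)) K" and "\<epsilon> > 0"
  obtains E where "E \<in> fmeasurable \<mu>" "\<And>f. f \<in> K \<Longrightarrow> tail_norm \<mu> E f \<le> \<epsilon>"
proof -
  have "\<exists>E\<in>fmeasurable \<mu>. \<forall>f\<in>K. tail_norm \<mu> E f \<le> \<epsilon>"
  proof (rule ccontr)
    assume "\<not> ?thesis"
    then have not_tight: "\<exists>f\<in>K. \<epsilon> < tail_norm \<mu> E f" if "E \<in> fmeasurable \<mu>" for E
      using that by (auto simp: not_le)
    obtain c where "c \<in> K" and c: "\<And>E G \<delta>. E \<in> fmeasurable \<mu> \<Longrightarrow> finite G \<Longrightarrow> G \<subseteq> Linf \<mu> \<Longrightarrow>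
        \<delta> > 0 \<Longrightarrow> \<exists>f\<in>K. \<epsilon> < tail_norm \<mu> E f \<and> (\<forall>g\<in>G. \<bar>pairing \<mu> f g - pairing \<mu> c g\<bar> < \<delta>)"
      using compactin_weak_L1_not_tight_cluster_point[where \<epsilon> = \<epsilon>, OF K not_tight] by blast
    have K_integrable: "integrable \<mu> f" if "f \<in> K" for f
      using compactin_subset_topspace[OF K] that by (auto simp: L1_def)
    have "\<epsilon> / 10 > 0" using \<open>\<epsilon> > 0\<close> by simp
    note near = c[OF _ _ _ this]
    obtain f E F \<sigma> where hump: "gliding_hump \<mu> c f E F \<sigma> \<epsilon> (\<epsilon> / 10)" and f: "\<And>n. f n \<in> K"
      using gliding_hump_exists[where \<epsilon> = \<epsilon> and c = c and \<delta> = "\<epsilon> / 10",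
          OF K_integrable K_integrable[OF \<open>c \<in> K\<close>] \<open>\<epsilon> / 10 > 0\<close> near] by blast
    obtain c' where "c' \<in> K" and c': "\<And>i G \<delta>. finite G \<Longrightarrow> G \<subseteq> Linf \<mu> \<Longrightarrow> \<delta> > 0 \<Longrightarrow>
        \<exists>j\<ge>i. \<forall>g\<in>G. \<bar>pairing \<mu> (f j) g - pairing \<mu> c' g\<bar> < \<delta>"
      using compactin_weak_topology_sequence_cluster_point[where f = f, OF K f] by blast
    have "5 * (\<epsilon> / 10) < \<epsilon>" using \<open>\<epsilon> > 0\<close> by simp
    from gliding_hump.no_weak_cluster_point[OF hump this K_integrable[OF \<open>c' \<in> K\<close>] c']
    show False .
  qed
  then show ?thesis using that by blast
qed


section \<open>The Mackey topologies\<close>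

lemma L1_dual_uniform_approx:
  assumes K: "compactin (weak_topology (L1 \<mu>) (Linf \<mu>) (pairing \<mu>)) K"
    and \<phi>: "\<phi> \<in> L1_dual \<mu>" and "e > 0"
  shows "\<exists>g\<in>Linf \<mu>. \<forall>f\<in>K. \<bar>\<phi> f - pairing \<mu> f g\<bar> \<le> e"
proof -
  obtain C where C: "\<And>f. f \<in> L1 \<mu> \<Longrightarrow> \<bar>\<phi> f\<bar> \<le> C * (LINT x|\<mu>. \<bar>f x\<bar>)" "C \<ge> 0"
    using L1_dual_bound[OF \<phi>] by blast
  obtain E where E: "E \<in> fmeasurable \<mu>" and tail: "\<And>f. f \<in> K \<Longrightarrow> tail_norm \<mu> E f \<le> e / (C + 1)"
    using compactin_weak_L1_tight[OF K, of "e / (C + 1)"] \<open>e > 0\<close> C(2) by auto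
  obtain g where "g \<in> Linf \<mu>" and g: "\<And>f. f \<in> L1 \<mu> \<Longrightarrow> \<phi> (\<lambda>x. indicator E x * f x) = pairing \<mu> f g"
    using L1_dual_restrict_representable[OF \<phi> E] by blast
  have "\<bar>\<phi> f - pairing \<mu> f g\<bar> \<le> e" if "f \<in> K" for f
  proof -
    have f: "f \<in> L1 \<mu>" using compactin_subset_topspace[OF K] that by auto
    have parts: "(\<lambda>x. indicator E x * f x) \<in> L1 \<mu>" "(\<lambda>x. (1 - indicator E x) * f x) \<in> L1 \<mu>"
      using f E by (auto simp: L1_def algebra_simps integrable_real_mult_indicator mult.commute fmeasurableD)
    have "\<phi> f = \<phi> (\<lambda>x. indicator E x * f x) + \<phi> (\<lambda>x. (1 - indicator E x) * f x)"
      using L1_dual_add[OF \<phi> parts] by (simp add: algebra_simps)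
    moreover have "\<bar>\<phi> (\<lambda>x. (1 - indicator E x) * f x)\<bar> \<le> C * tail_norm \<mu> E f"
      using C(1)[OF parts(2)] unfolding tail_norm_def by (simp add: abs_mult)
    moreover have "C * tail_norm \<mu> E f \<le> C * (e / (C + 1))"
      using tail[OF that] C(2) by (rule mult_left_mono)
    moreover have "C * (e / (C + 1)) \<le> e"
      using C(2) \<open>e > 0\<close> by (simp add: field_simps)
    ultimately show ?thesis using g[OF f] by linarith
  qed
  then show ?thesis using \<open>g \<in> Linf \<mu>\<close> by blast
qed

lemma compactin_weak_L1_Linf_iff_L1_dual:
  "compactin (weak_topology (L1 \<mu>) (Linf \<mu>) (pairing \<mu>)) K \<longleftrightarrow>
   compactin (weak_topology (L1 \<mu>) (L1_dual \<mu>) (\<lambda>f \<phi>. \<phi> f)) K"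
proof
  assume K: "compactin (weak_topology (L1 \<mu>) (Linf \<mu>) (pairing \<mu>)) K"
  show "compactin (weak_topology (L1 \<mu>) (L1_dual \<mu>) (\<lambda>f \<phi>. \<phi> f)) K"
    using K L1_dual_uniform_approx[OF K] by (rule compactin_weak_topology_uniform_approx)
next
  assume "compactin (weak_topology (L1 \<mu>) (L1_dual \<mu>) (\<lambda>f \<phi>. \<phi> f)) K"
  then show "compactin (weak_topology (L1 \<mu>) (Linf \<mu>) (pairing \<mu>)) K"
    by (rule compactin_weak_topology_uniform_approx) (use pairing_in_L1_dual in force)
qed

theorem mainTheorem6:
  fixes \<mu> :: "'a measure"
  assumes "semifinite_measure \<mu>"
  shows "mackey_topology (Linf \<mu>) (L1 \<mu>) (pairing \<mu>) =
         pullback_topology (Linf \<mu>) (\<lambda>g f. pairing \<mu> f g)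
           (mackey_topology (L1_dual \<mu>) (L1 \<mu>) (\<lambda>f \<phi>. \<phi> f))"
proof -
  have "pullback_topology (Linf \<mu>) (\<lambda>g f. pairing \<mu> f g)
      (mackey_topology (L1_dual \<mu>) (L1 \<mu>) (\<lambda>f \<phi>. \<phi> f)) =
    unif_conv_topology (Linf \<mu>)
      {K. K \<subseteq> L1 \<mu> \<and> abs_convex K \<and> compactin (weak_topology (L1 \<mu>) (L1_dual \<mu>) (\<lambda>f \<phi>. \<phi> f)) K}
      (pairing \<mu>)"
    unfolding mackey_topology_def by (rule pullback_unif_conv_topology) (simp_all add: pairing_in_L1_dual)
  then show ?thesis unfolding mackey_topology_def compactin_weak_L1_Linf_iff_L1_dual by simp
qed

end
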